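(* For every positive integer $n$ there is a DAG $G_n$ with $3n$ vertices whose underlying graph is 3-connected, such that $G_n$ is upward-planar, every vertex of $G_n$ has degree at most four, every directed path in $G_n$ has length at most five, and $\mathrm{span}(G_n)\ge n/2$.
   Context: A DAG is a directed acyclic graph. An upward-planar layered drawing of a DAG $G$ maps each vertex $v$ to a point in the plane whose y-coordinate $y(v)$ is an integer, and each edge $(u,v)$ (directed from its tail $u$ to its head $v$) to a strictly y-monotone curve going upward from $u$ to $v$ (so $y(u)<y(v)$), such that no two edges intersect except at common endpoints. $G$ is upward-planar if it has such a drawing. The span of an edge $(u,v)$ in such a drawing $\Gamma$ is $y(v)-y(u)$; the span of $\Gamma$ is the maximum span of its edges; $\mathrm{span}(G)$ is the minimum span over all upward-planar layered drawings of $G$. The degree of a vertex is its total number of incident edges. The length of a directed path is its number of edges. *)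

theory Defs
  imports "HOL-Analysis.Analysis"
begin

definition is_dag :: "'a set \<Rightarrow> ('a \<times> 'a) set \<Rightarrow> bool" where
  "is_dag V E \<longleftrightarrow> finite V \<and> E \<subseteq> V \<times> V \<and> acyclic E"

definition und_adj :: "('a \<times> 'a) set \<Rightarrow> 'a \<Rightarrow> 'a \<Rightarrow> bool" where
  "und_adj E u v \<longleftrightarrow> (u, v) \<in> E \<or> (v, u) \<in> E"

definition und_connected_on :: "('a \<times> 'a) set \<Rightarrow> 'a set \<Rightarrow> bool" where
  "und_connected_on E W \<longleftrightarrow>
     (\<forall>a\<in>W. \<forall>b\<in>W. (a, b) \<in> {(u, v). u \<in> W \<and> v \<in> W \<and> und_adj E u v}\<^sup>*)"

definition three_connected :: "'a set \<Rightarrow> ('a \<times> 'a) set \<Rightarrow> bool" where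
  "three_connected V E \<longleftrightarrow> card V \<ge> 3 \<and>
     (\<forall>S \<subseteq> V. card S \<le> 2 \<longrightarrow> und_connected_on E (V - S))"

definition degree :: "('a \<times> 'a) set \<Rightarrow> 'a \<Rightarrow> nat" where
  "degree E v = card {e \<in> E. fst e = v \<or> snd e = v}"

text \<open>Directed path as a list of distinct vertices; its length is the number of edges.\<close>
definition dir_path :: "'a set \<Rightarrow> ('a \<times> 'a) set \<Rightarrow> 'a list \<Rightarrow> bool" where
  "dir_path V E xs \<longleftrightarrow> xs \<noteq> [] \<and> distinct xs \<and> set xs \<subseteq> V \<and>
     (\<forall>i. Suc i < length xs \<longrightarrow> (xs ! i, xs ! Suc i) \<in> E)"

definition updraw_point :: "('a \<Rightarrow> real) \<Rightarrow> ('a \<Rightarrow> int) \<Rightarrow> 'a \<Rightarrow> real \<times> real" where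
  "updraw_point xp y v = (xp v, real_of_int (y v))"

definition upward_planar_layered_drawing ::
  "'a set \<Rightarrow> ('a \<times> 'a) set \<Rightarrow> ('a \<Rightarrow> real) \<Rightarrow> ('a \<Rightarrow> int)
     \<Rightarrow> ('a \<times> 'a \<Rightarrow> real \<Rightarrow> real \<times> real) \<Rightarrow> bool" where
  "upward_planar_layered_drawing V E xp y c \<longleftrightarrow>
     inj_on (updraw_point xp y) V \<and>
     (\<forall>e\<in>E. continuous_on {0..1} (c e) \<and>
        c e 0 = updraw_point xp y (fst e) \<and> c e 1 = updraw_point xp y (snd e) \<and>
        (\<forall>s t. 0 \<le> s \<longrightarrow> s < t \<longrightarrow> t \<le> 1 \<longrightarrow> snd (c e s) < snd (c e t))) \<and>
     (\<forall>e\<in>E. \<forall>t. 0 < t \<longrightarrow> t < 1 \<longrightarrow> (\<forall>w\<in>V. c e t \<noteq> updraw_point xp y w)) \<and>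
     (\<forall>e\<in>E. \<forall>f\<in>E. e \<noteq> f \<longrightarrow> (\<forall>s t. 0 \<le> s \<longrightarrow> s \<le> 1 \<longrightarrow> 0 \<le> t \<longrightarrow> t \<le> 1 \<longrightarrow>
        c e s = c f t \<longrightarrow>
        (\<exists>w. (w = fst e \<or> w = snd e) \<and> (w = fst f \<or> w = snd f) \<and>
             c e s = updraw_point xp y w)))"

definition upward_planar :: "'a set \<Rightarrow> ('a \<times> 'a) set \<Rightarrow> bool" where
  "upward_planar V E \<longleftrightarrow> (\<exists>xp y c. upward_planar_layered_drawing V E xp y c)"

definition drawing_span :: "('a \<times> 'a) set \<Rightarrow> ('a \<Rightarrow> int) \<Rightarrow> int" where
  "drawing_span E y = Max (insert 0 ((\<lambda>(u, v). y v - y u) ` E))"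

definition graph_span :: "'a set \<Rightarrow> ('a \<times> 'a) set \<Rightarrow> nat" where
  "graph_span V E = (LEAST k::nat. \<exists>xp y c. upward_planar_layered_drawing V E xp y c \<and>
                                      drawing_span E y = int k)"

end

theory Submission
  imports Defs
begin

text \<open>
  G consists of T triangles tb i -> tm i -> tt i <- tb i and L levels, the 4-cycles
  ls k -> la k, lb k -> lt k, where consecutive blocks are joined by three disjoint edges
  and 3 T + 4 L = 3 n; degrees, path lengths and 3-connectivity are checked directly.

  In an upward planar drawing the paths ls k -> la k -> lt k, ls k -> lb k -> lt k and
  ls k -> la (k + 1) -> lt k form a theta graph, so the middle vertex of one of them lies in
  the lens bounded by the other two. It cannot be la k or lb k, which are joined, avoiding the
  boundary of the lens, to vertices outside it; so it is la (k + 1), and with it ls (k + 1)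
  and lt (k + 1) lie inside the lens of level k. Hence y (ls k) increases and y (lt k) decreases
  with k, level 0 spans at least 2 L layers, and one of the edges ls 0 -> la 0 and
  tb (T - 1) -> tt (T - 1) has span at least L + 1, which is at least n / 2 for
  L = 3 ((n - 1) div 4).

  Upward planarity is witnessed by an explicit drawing in which the frame of each triangle or
  level is nested in the frame of its predecessor and every edge is a piecewise linear route
  inside its frame.
\<close>

lemma continuous_on_segment_sign_const:
  fixes \<phi> :: "real \<Rightarrow> real"
  assumes cont: "continuous_on (closed_segment a b) \<phi>" and pos: "\<phi> a > 0"
    and nz: "\<And>z. z \<in> closed_segment a b \<Longrightarrow> \<phi> z \<noteq> 0"
  shows "\<phi> b > 0"
proof (rule ccontr)
  assume "\<not> \<phi> b > 0"
  hence "0 \<in> {\<phi> b..\<phi> a}" using pos by auto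
  moreover have "connected (\<phi> ` closed_segment a b)"
    by (rule connected_continuous_image[OF cont connected_segment])
  ultimately have "0 \<in> \<phi> ` closed_segment a b"
    using connected_contains_Icc by blast
  with nz show False by auto
qed

lemma drawing_span_edge: "finite E \<Longrightarrow> (u, v) \<in> E \<Longrightarrow> y v - y u \<le> drawing_span E y"
  unfolding drawing_span_def by (rule Max_ge) force+

lemma graph_span_attained:
  assumes "upward_planar_layered_drawing V E xp y c" "finite E"
  obtains xp' y' c' where "upward_planar_layered_drawing V E xp' y' c'"
    "drawing_span E y' = int (graph_span V E)"
proof -
  let ?P = "\<lambda>k::nat. \<exists>xp y c. upward_planar_layered_drawing V E xp y c \<and> drawing_span E y = int k"
  have "0 \<le> drawing_span E y" unfolding drawing_span_def by (rule Max_ge) (use assms(2) in auto)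
  hence "?P (nat (drawing_span E y))" using assms(1) by auto
  hence "?P (LEAST k. ?P k)" by (rule LeastI)
  thus ?thesis using that unfolding graph_span_def by blast
qed

locale upward_drawing =
  fixes V :: "'a set" and E :: "('a \<times> 'a) set"
    and xp :: "'a \<Rightarrow> real" and y :: "'a \<Rightarrow> int" and c :: "'a \<times> 'a \<Rightarrow> real \<Rightarrow> real \<times> real"
  assumes drawing: "upward_planar_layered_drawing V E xp y c"
begin

abbreviation yr :: "'a \<Rightarrow> real" where "yr v \<equiv> real_of_int (y v)"

lemma curve_cont: "e \<in> E \<Longrightarrow> continuous_on {0..1} (c e)"
  using drawing unfolding upward_planar_layered_drawing_def by auto

lemma curve_start: "e \<in> E \<Longrightarrow> c e 0 = (xp (fst e), yr (fst e))"
  using drawing unfolding upward_planar_layered_drawing_def updraw_point_def by auto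

lemma curve_end: "e \<in> E \<Longrightarrow> c e 1 = (xp (snd e), yr (snd e))"
  using drawing unfolding upward_planar_layered_drawing_def updraw_point_def by auto

lemma curve_height_mono:
  "e \<in> E \<Longrightarrow> 0 \<le> s \<Longrightarrow> s < t \<Longrightarrow> t \<le> 1 \<Longrightarrow> snd (c e s) < snd (c e t)"
  using drawing unfolding upward_planar_layered_drawing_def by auto

lemma curves_meet_at_common_end:
  "e \<in> E \<Longrightarrow> f \<in> E \<Longrightarrow> e \<noteq> f \<Longrightarrow> 0 \<le> s \<Longrightarrow> s \<le> 1 \<Longrightarrow> 0 \<le> t \<Longrightarrow> t \<le> 1 \<Longrightarrow>
   c e s = c f t \<Longrightarrow> \<exists>w. (w = fst e \<or> w = snd e) \<and> (w = fst f \<or> w = snd f) \<and> c e s = (xp w, yr w)"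
  using drawing unfolding upward_planar_layered_drawing_def updraw_point_def by auto

lemma edge_up: "(u, v) \<in> E \<Longrightarrow> y u < y v"
  using curve_height_mono[of "(u, v)" 0 1] curve_start[of "(u, v)"] curve_end[of "(u, v)"] by simp

definition height_param :: "'a \<times> 'a \<Rightarrow> real \<Rightarrow> real" where
  "height_param e h = (THE t. 0 \<le> t \<and> t \<le> 1 \<and> snd (c e t) = h)"

definition edge_x :: "'a \<times> 'a \<Rightarrow> real \<Rightarrow> real" where
  "edge_x e h = fst (c e (height_param e h))"

lemma height_param_unique:
  "e \<in> E \<Longrightarrow> 0 \<le> s \<Longrightarrow> s \<le> 1 \<Longrightarrow> 0 \<le> t \<Longrightarrow> t \<le> 1 \<Longrightarrow> snd (c e s) = snd (c e t) \<Longrightarrow> s = t"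
  by (metis less_irrefl linorder_neqE_linordered_idom curve_height_mono)

lemma height_param_curve: "e \<in> E \<Longrightarrow> 0 \<le> t \<Longrightarrow> t \<le> 1 \<Longrightarrow> height_param e (snd (c e t)) = t"
  unfolding height_param_def by (rule the_equality) (use height_param_unique in auto)

lemma curve_height_image: assumes e: "(u, v) \<in> E"
  shows "(\<lambda>t. snd (c (u, v) t)) ` {0..1} = {yr u..yr v}"
proof
  show "(\<lambda>t. snd (c (u, v) t)) ` {0..1} \<subseteq> {yr u..yr v}"
  proof
    fix z assume "z \<in> (\<lambda>t. snd (c (u, v) t)) ` {0..1}"
    then obtain t where t: "0 \<le> t" "t \<le> 1" "z = snd (c (u, v) t)" by auto
    have "snd (c (u, v) 0) \<le> z"
      using curve_height_mono[OF e, of 0 t] t by (cases "t = 0") auto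
    moreover have "z \<le> snd (c (u, v) 1)"
      using curve_height_mono[OF e, of t 1] t by (cases "t = 1") auto
    ultimately show "z \<in> {yr u..yr v}" using curve_start[OF e] curve_end[OF e] by simp
  qed
  show "{yr u..yr v} \<subseteq> (\<lambda>t. snd (c (u, v) t)) ` {0..1}"
  proof
    fix h assume h: "h \<in> {yr u..yr v}"
    have "continuous_on {0..1} (\<lambda>t. snd (c (u, v) t))" by (intro continuous_intros curve_cont[OF e])
    then obtain t where "0 \<le> t" "t \<le> 1" "snd (c (u, v) t) = h"
      using IVT'[of "\<lambda>t. snd (c (u, v) t)" 0 h 1] h curve_start[OF e] curve_end[OF e] by auto
    thus "h \<in> (\<lambda>t. snd (c (u, v) t)) ` {0..1}" by force
  qed
qed

lemma curve_at_height: assumes e: "(u, v) \<in> E" and h: "yr u \<le> h" "h \<le> yr v"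
  shows "0 \<le> height_param (u, v) h \<and> height_param (u, v) h \<le> 1 \<and>
    c (u, v) (height_param (u, v) h) = (edge_x (u, v) h, h)"
proof -
  have "h \<in> (\<lambda>t. snd (c (u, v) t)) ` {0..1}" using curve_height_image[OF e] h by simp
  then obtain t where t: "0 \<le> t" "t \<le> 1" "h = snd (c (u, v) t)" by auto
  have "c (u, v) t = (fst (c (u, v) t), h)" using t(3) by simp
  thus ?thesis using height_param_curve[OF e t(1,2)] t unfolding edge_x_def by simp
qed

lemma edge_x_start: "(u, v) \<in> E \<Longrightarrow> edge_x (u, v) (yr u) = xp u"
  unfolding edge_x_def using height_param_curve[of "(u, v)" 0] curve_start[of "(u, v)"] by simp

lemma edge_x_end: "(u, v) \<in> E \<Longrightarrow> edge_x (u, v) (yr v) = xp v"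
  unfolding edge_x_def using height_param_curve[of "(u, v)" 1] curve_end[of "(u, v)"] by simp

lemma edge_x_cont: assumes e: "(u, v) \<in> E" shows "continuous_on {yr u..yr v} (edge_x (u, v))"
proof -
  have "continuous_on {0..1} (\<lambda>t. snd (c (u, v) t))" by (intro continuous_intros curve_cont[OF e])
  from continuous_on_inv[OF this compact_Icc, of "height_param (u, v)"]
  have inv: "continuous_on {yr u..yr v} (height_param (u, v))"
    using height_param_curve[OF e] curve_height_image[OF e] by simp
  have "height_param (u, v) ` {yr u..yr v} \<subseteq> {0..1}" using curve_at_height[OF e] by auto
  from continuous_on_compose[OF inv continuous_on_subset[OF curve_cont[OF e] this]]
  show ?thesis unfolding edge_x_def o_def by (rule continuous_on_fst)
qed

lemma edge_x_cross:
  assumes e: "(u, v) \<in> E" and f: "(u', v') \<in> E" and ne: "(u, v) \<noteq> (u', v')"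
    and h: "yr u \<le> h" "h \<le> yr v" "yr u' \<le> h" "h \<le> yr v'"
    and eq: "edge_x (u, v) h = edge_x (u', v') h"
  shows "\<exists>w. (w = u \<or> w = v) \<and> (w = u' \<or> w = v') \<and> yr w = h"
proof -
  note pe = curve_at_height[OF e h(1,2)] and pf = curve_at_height[OF f h(3,4)]
  have "c (u, v) (height_param (u, v) h) = c (u', v') (height_param (u', v') h)"
    using pe pf eq by simp
  from curves_meet_at_common_end[OF e f ne _ _ _ _ this] pe pf show ?thesis by fastforce
qed

definition path_x :: "'a \<Rightarrow> 'a \<Rightarrow> 'a \<Rightarrow> real \<Rightarrow> real" where
  "path_x s p t h = (if h \<le> yr p then edge_x (s, p) h else edge_x (p, t) h)"

lemma path_x_cont: assumes e: "(s, p) \<in> E" "(p, t) \<in> E"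
  shows "continuous_on {yr s..yr t} (path_x s p t)"
proof -
  have "continuous_on {yr s..yr t} (\<lambda>h. if id h \<le> yr p then edge_x (s, p) h else edge_x (p, t) h)"
  proof (rule continuous_on_cases_le)
    show "continuous_on {h \<in> {yr s..yr t}. id h \<le> yr p} (edge_x (s, p))"
      by (rule continuous_on_subset[OF edge_x_cont[OF e(1)]]) auto
    show "continuous_on {h \<in> {yr s..yr t}. yr p \<le> id h} (edge_x (p, t))"
      by (rule continuous_on_subset[OF edge_x_cont[OF e(2)]]) auto
  qed (use edge_x_end[OF e(1)] edge_x_start[OF e(2)] in \<open>auto intro: continuous_on_id\<close>)
  thus ?thesis unfolding path_x_def by simp
qed

lemma path_x_start: "(s, p) \<in> E \<Longrightarrow> path_x s p t (yr s) = xp s"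
  unfolding path_x_def using edge_up[of s p] edge_x_start[of s p] by auto

lemma path_x_end: "(s, p) \<in> E \<Longrightarrow> (p, t) \<in> E \<Longrightarrow> path_x s p t (yr t) = xp t"
  unfolding path_x_def using edge_up[of p t] edge_x_end[of p t] by auto

lemma path_x_mid: "(s, p) \<in> E \<Longrightarrow> path_x s p t (yr p) = xp p"
  unfolding path_x_def using edge_x_end[of s p] by auto

lemma path_x_on_edge:
  assumes "(s, p) \<in> E" "(p, t) \<in> E" "yr s \<le> h" "h \<le> yr t"
  obtains a b where "(a, b) \<in> {(s, p), (p, t)}" "yr a \<le> h" "h \<le> yr b" "path_x s p t h = edge_x (a, b) h"
proof (cases "h \<le> yr p")
  case True thus ?thesis using that[of s p] assms unfolding path_x_def by auto
next
  case False thus ?thesis using that[of p t] assms unfolding path_x_def by auto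
qed

lemma path_x_neq:
  assumes e: "(s, p) \<in> E" "(p, t) \<in> E" "(s, q) \<in> E" "(q, t) \<in> E" and pq: "p \<noteq> q"
    and h: "yr s < h" "h < yr t"
  shows "path_x s p t h \<noteq> path_x s q t h"
proof
  assume eq: "path_x s p t h = path_x s q t h"
  have h': "yr s \<le> h" "h \<le> yr t" using h by auto
  have ys: "y s < y p" "y p < y t" "y s < y q" "y q < y t" using edge_up e by blast+
  obtain a b where ab: "(a, b) \<in> {(s, p), (p, t)}" "yr a \<le> h" "h \<le> yr b"
    "path_x s p t h = edge_x (a, b) h"
    by (rule path_x_on_edge[OF e(1,2) h'])
  obtain a' b' where ab': "(a', b') \<in> {(s, q), (q, t)}" "yr a' \<le> h" "h \<le> yr b'"
    "path_x s q t h = edge_x (a', b') h"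
    by (rule path_x_on_edge[OF e(3,4) h'])
  have E: "(a, b) \<in> E" "(a', b') \<in> E" using ab(1) ab'(1) e by auto
  have "(a, b) \<noteq> (a', b')" using ab(1) ab'(1) pq ys by auto
  moreover have "edge_x (a, b) h = edge_x (a', b') h" using eq ab(4) ab'(4) by simp
  ultimately obtain w where "w = a \<or> w = b" "w = a' \<or> w = b'" "yr w = h"
    using edge_x_cross[OF E] ab(2,3) ab'(2,3) by blast
  thus False using ab(1) ab'(1) pq h by auto
qed

lemma edge_x_neq_path_x:
  assumes l: "(s, p) \<in> E" "(p, t) \<in> E" and e: "(u1, u2) \<in> E"
    and nl: "u1 \<notin> {s, p, t}" "u2 \<notin> {s, p, t}"
    and h: "yr u1 \<le> h" "h \<le> yr u2" "yr s \<le> h" "h \<le> yr t"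
  shows "edge_x (u1, u2) h \<noteq> path_x s p t h"
proof
  assume eq: "edge_x (u1, u2) h = path_x s p t h"
  obtain a b where ab: "(a, b) \<in> {(s, p), (p, t)}" "yr a \<le> h" "h \<le> yr b"
    "path_x s p t h = edge_x (a, b) h"
    by (rule path_x_on_edge[OF l h(3,4)])
  have "(a, b) \<in> E" using ab(1) l by auto
  moreover have "(u1, u2) \<noteq> (a, b)" using ab(1) nl by auto
  moreover have "edge_x (u1, u2) h = edge_x (a, b) h" using eq ab(4) by simp
  ultimately obtain w where "w = u1 \<or> w = u2" "w = a \<or> w = b"
    using edge_x_cross[OF e] h(1,2) ab(2,3) by blast
  thus False using ab(1) nl by auto
qed

definition in_lens :: "'a \<Rightarrow> 'a \<Rightarrow> 'a \<Rightarrow> 'a \<Rightarrow> real \<Rightarrow> real \<Rightarrow> bool" where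
  "in_lens s p q t x h \<longleftrightarrow> yr s < h \<and> h < yr t \<and>
     (path_x s p t h < x \<and> x < path_x s q t h \<or> path_x s q t h < x \<and> x < path_x s p t h)"

lemma in_lens_sym: "in_lens s p q t x h = in_lens s q p t x h"
  unfolding in_lens_def by auto

lemma edge_between_paths:
  assumes l: "(s, p) \<in> E" "(p, t) \<in> E" "(s, q) \<in> E" "(q, t) \<in> E"
    and e: "(u1, u2) \<in> E" and nl: "u1 \<notin> {s, p, q, t}" "u2 \<notin> {s, p, q, t}" and v: "v \<in> {u1, u2}"
    and start: "path_x s p t (yr v) < xp v" "xp v < path_x s q t (yr v)"
    and J: "closed_segment (yr v) h \<subseteq> {yr u1..yr u2} \<inter> {yr s..yr t}"
  shows "path_x s p t h < edge_x (u1, u2) h \<and> edge_x (u1, u2) h < path_x s q t h"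
proof -
  define g where "g = edge_x (u1, u2)"
  define F where "F = path_x s p t"
  define G where "G = path_x s q t"
  have g0: "F (yr v) < g (yr v)" "g (yr v) < G (yr v)"
    using v start edge_x_start[OF e] edge_x_end[OF e] unfolding g_def F_def G_def by auto
  have J1: "closed_segment (yr v) h \<subseteq> {yr s..yr t}" and J2: "closed_segment (yr v) h \<subseteq> {yr u1..yr u2}"
    using J by auto
  have cF: "continuous_on (closed_segment (yr v) h) F"
    unfolding F_def by (rule continuous_on_subset[OF path_x_cont[OF l(1,2)] J1])
  have cG: "continuous_on (closed_segment (yr v) h) G"
    unfolding G_def by (rule continuous_on_subset[OF path_x_cont[OF l(3,4)] J1])
  have cg: "continuous_on (closed_segment (yr v) h) g"
    unfolding g_def by (rule continuous_on_subset[OF edge_x_cont[OF e] J2])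
  have nlp: "u1 \<notin> {s, p, t}" "u2 \<notin> {s, p, t}" and nlq: "u1 \<notin> {s, q, t}" "u2 \<notin> {s, q, t}"
    using nl by auto
  have nz: "g z - F z \<noteq> 0" "G z - g z \<noteq> 0" if "z \<in> closed_segment (yr v) h" for z
  proof -
    have z: "yr u1 \<le> z" "z \<le> yr u2" "yr s \<le> z" "z \<le> yr t" using that J by auto
    show "g z - F z \<noteq> 0" "G z - g z \<noteq> 0"
      using edge_x_neq_path_x[OF l(1,2) e nlp z] edge_x_neq_path_x[OF l(3,4) e nlq z]
      unfolding g_def F_def G_def by auto
  qed
  have "0 < g h - F h"
    by (rule continuous_on_segment_sign_const[of _ _ "\<lambda>z. g z - F z"])
      (use cg cF nz(1) g0 in \<open>auto intro: continuous_intros\<close>)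
  moreover have "0 < G h - g h"
    by (rule continuous_on_segment_sign_const[of _ _ "\<lambda>z. G z - g z"])
      (use cG cg nz(2) g0 in \<open>auto intro: continuous_intros\<close>)
  ultimately show ?thesis unfolding g_def F_def G_def by simp
qed

lemma in_lens_edge_oriented:
  assumes l: "(s, p) \<in> E" "(p, t) \<in> E" "(s, q) \<in> E" "(q, t) \<in> E"
    and e: "(u1, u2) \<in> E" and nl: "u1 \<notin> {s, p, q, t}" "u2 \<notin> {s, p, q, t}"
    and vw: "v \<in> {u1, u2}" "w \<in> {u1, u2}"
    and v: "yr s < yr v" "yr v < yr t" "path_x s p t (yr v) < xp v" "xp v < path_x s q t (yr v)"
  shows "yr s < yr w \<and> yr w < yr t \<and> path_x s p t (yr w) < xp w \<and> xp w < path_x s q t (yr w)"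
proof -
  note between = edge_between_paths[OF l e nl vw(1) v(3,4)]
  have u12: "yr u1 \<le> yr v" "yr v \<le> yr u2" "yr u1 \<le> yr w" "yr w \<le> yr u2"
    using vw edge_up[OF e] by auto
  have ends: "path_x s p t (yr s) = path_x s q t (yr s)" "path_x s p t (yr t) = path_x s q t (yr t)"
    using path_x_start l path_x_end by metis+
  have "yr u2 < yr t"
  proof (rule ccontr)
    assume "\<not> yr u2 < yr t"
    hence "closed_segment (yr v) (yr t) \<subseteq> {yr u1..yr u2} \<inter> {yr s..yr t}"
      using u12 v(1,2) by (auto simp: closed_segment_eq_real_ivl)
    from between[OF this] ends(2) show False by linarith
  qed
  moreover have "yr s < yr u1"
  proof (rule ccontr)
    assume "\<not> yr s < yr u1"
    hence "closed_segment (yr v) (yr s) \<subseteq> {yr u1..yr u2} \<inter> {yr s..yr t}"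
      using u12 v(1,2) by (auto simp: closed_segment_eq_real_ivl)
    from between[OF this] ends(1) show False by linarith
  qed
  ultimately have "closed_segment (yr v) (yr w) \<subseteq> {yr u1..yr u2} \<inter> {yr s..yr t}"
    using u12 by (auto simp: closed_segment_eq_real_ivl)
  from between[OF this] show ?thesis
    using vw edge_x_start[OF e] edge_x_end[OF e] u12 \<open>yr u2 < yr t\<close> \<open>yr s < yr u1\<close> by auto
qed

lemma in_lens_neighbour:
  assumes l: "(s, p) \<in> E" "(p, t) \<in> E" "(s, q) \<in> E" "(q, t) \<in> E"
    and e: "und_adj E v w" and nl: "v \<notin> {s, p, q, t}" "w \<notin> {s, p, q, t}"
    and ins: "in_lens s p q t (xp v) (yr v)"
  shows "in_lens s p q t (xp w) (yr w)"
proof -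
  obtain u1 u2 where u: "(u1, u2) \<in> E" "v \<in> {u1, u2}" "w \<in> {u1, u2}" "{u1, u2} \<subseteq> {v, w}"
    using e unfolding und_adj_def by auto
  have nl': "u1 \<notin> {s, p, q, t}" "u2 \<notin> {s, p, q, t}" "u1 \<notin> {s, q, p, t}" "u2 \<notin> {s, q, p, t}"
    using u(4) nl by auto
  from ins consider
      "yr s < yr v" "yr v < yr t" "path_x s p t (yr v) < xp v" "xp v < path_x s q t (yr v)"
    | "yr s < yr v" "yr v < yr t" "path_x s q t (yr v) < xp v" "xp v < path_x s p t (yr v)"
    unfolding in_lens_def by blast
  thus ?thesis
  proof cases
    case 1
    from in_lens_edge_oriented[OF l u(1) nl'(1,2) u(2,3) 1] show ?thesis unfolding in_lens_def by blast
  next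
    case 2
    from in_lens_edge_oriented[OF l(3,4,1,2) u(1) nl'(3,4) u(2,3) 2] show ?thesis unfolding in_lens_def by blast
  qed
qed

lemma path_x_order_const:
  assumes l: "(s, p) \<in> E" "(p, t) \<in> E" "(s, q) \<in> E" "(q, t) \<in> E" and pq: "p \<noteq> q"
    and h: "yr s < h1" "h1 < yr t" "yr s < h2" "h2 < yr t"
    and lt: "path_x s p t h1 < path_x s q t h1"
  shows "path_x s p t h2 < path_x s q t h2"
proof -
  have J: "closed_segment h1 h2 \<subseteq> {yr s..yr t}" using h by (auto simp: closed_segment_eq_real_ivl split: if_splits)
  have "0 < path_x s q t h2 - path_x s p t h2"
  proof (rule continuous_on_segment_sign_const[of h1 h2 "\<lambda>h. path_x s q t h - path_x s p t h"])
    show "continuous_on (closed_segment h1 h2) (\<lambda>h. path_x s q t h - path_x s p t h)"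
      using continuous_on_subset[OF path_x_cont[OF l(3,4)] J] continuous_on_subset[OF path_x_cont[OF l(1,2)] J]
      by (rule continuous_on_diff)
    show "0 < path_x s q t h1 - path_x s p t h1" using lt by simp
  next
    fix z assume "z \<in> closed_segment h1 h2"
    hence "yr s < z" "z < yr t" using h by (auto simp: closed_segment_eq_real_ivl split: if_splits)
    from path_x_neq[OF l pq this] show "path_x s q t z - path_x s p t z \<noteq> 0" by simp
  qed
  thus ?thesis by simp
qed

lemma middle_in_lens:
  assumes l: "(s, pa) \<in> E" "(pa, t) \<in> E" "(s, pm) \<in> E" "(pm, t) \<in> E" "(s, pb) \<in> E" "(pb, t) \<in> E"
    and d: "pa \<noteq> pm" "pm \<noteq> pb"
    and h: "yr s < h" "h < yr t" and o: "path_x s pa t h < path_x s pm t h" "path_x s pm t h < path_x s pb t h"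
  shows "in_lens s pa pb t (xp pm) (yr pm)"
proof -
  have hm: "yr s < yr pm" "yr pm < yr t" using edge_up[OF l(3)] edge_up[OF l(4)] by auto
  show ?thesis
    using path_x_order_const[OF l(1-4) d(1) h hm o(1)] path_x_order_const[OF l(3-6) d(2) h hm o(2)]
      hm path_x_mid[OF l(3)] unfolding in_lens_def by auto
qed

lemma theta_in_lens:
  assumes l: "(s, p1) \<in> E" "(p1, t) \<in> E" "(s, p2) \<in> E" "(p2, t) \<in> E" "(s, p3) \<in> E" "(p3, t) \<in> E"
    and d: "p1 \<noteq> p2" "p2 \<noteq> p3" "p1 \<noteq> p3"
  shows "in_lens s p2 p3 t (xp p1) (yr p1) \<or> in_lens s p1 p3 t (xp p2) (yr p2) \<or>
    in_lens s p1 p2 t (xp p3) (yr p3)"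
proof -
  define h where "h = yr p1"
  have h: "yr s < h" "h < yr t" using edge_up[OF l(1)] edge_up[OF l(2)] unfolding h_def by auto
  have "path_x s p1 t h \<noteq> path_x s p2 t h" "path_x s p2 t h \<noteq> path_x s p3 t h"
    "path_x s p1 t h \<noteq> path_x s p3 t h"
    using path_x_neq[OF l(1-4) d(1) h] path_x_neq[OF l(3-6) d(2) h] path_x_neq[OF l(1,2,5,6) d(3) h] by auto
  then consider
      "path_x s p1 t h < path_x s p2 t h" "path_x s p2 t h < path_x s p3 t h"
    | "path_x s p3 t h < path_x s p2 t h" "path_x s p2 t h < path_x s p1 t h"
    | "path_x s p2 t h < path_x s p1 t h" "path_x s p1 t h < path_x s p3 t h"
    | "path_x s p3 t h < path_x s p1 t h" "path_x s p1 t h < path_x s p2 t h"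
    | "path_x s p1 t h < path_x s p3 t h" "path_x s p3 t h < path_x s p2 t h"
    | "path_x s p2 t h < path_x s p3 t h" "path_x s p3 t h < path_x s p1 t h"
    by linarith
  thus ?thesis
    using middle_in_lens[OF l(1-6) d(1,2) h] middle_in_lens[OF l(5,6,3,4,1,2) d(2)[symmetric] d(1)[symmetric] h]
      middle_in_lens[OF l(3,4,1,2,5,6) d(1)[symmetric] d(3) h]
      middle_in_lens[OF l(5,6,1,2,3,4) d(3)[symmetric] d(1) h]
      middle_in_lens[OF l(1,2,5,6,3,4) d(3) d(2)[symmetric] h]
      middle_in_lens[OF l(3,4,5,6,1,2) d(2) d(3)[symmetric] h] in_lens_sym
    by cases blast+
qed

end

text \<open>A frame is a box [xL, xR] \<times> [yB, yT] with vertex slots pS (bottom), pL (left), pR (right)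
  and pC (top); the inner slots qL, qR, qC are the slots pL, pR, pC of the next frame, which
  is nested inside. A route is an upward piecewise linear curve between two slots; its name
  lists its end slots, with S, L, R, C standing for pS, pL, pR, pC (e.g. LqR runs from pL to qR).\<close>
datatype slot = pS | pL | pR | pC | qL | qR | qC
datatype route = SL | LC | SR | RC | SqL | qLC | SqR | RqC | SC | LR | LqR | LqL | qCC | qRR

fun route_src :: "route \<Rightarrow> slot" where
  "route_src SL = pS" | "route_src LC = pL" | "route_src SR = pS" | "route_src RC = pR"
| "route_src SqL = pS" | "route_src qLC = qL" | "route_src SqR = pS" | "route_src RqC = pR"
| "route_src SC = pS" | "route_src LR = pL" | "route_src LqR = pL" | "route_src LqL = pL"
| "route_src qCC = qC" | "route_src qRR = qR"

fun route_dst :: "route \<Rightarrow> slot" where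
  "route_dst SL = pL" | "route_dst LC = pC" | "route_dst SR = pR" | "route_dst RC = pC"
| "route_dst SqL = qL" | "route_dst qLC = pC" | "route_dst SqR = qR" | "route_dst RqC = qC"
| "route_dst SC = pC" | "route_dst LR = pR" | "route_dst LqR = qR" | "route_dst LqL = qL"
| "route_dst qCC = pC" | "route_dst qRR = pR"

text \<open>Frames of a triangle followed by a triangle (TriN), by the first level (TriJ) or by
  nothing (Tri0), and frames of a level followed by a level (LevN) or by nothing (LevL).\<close>
datatype frame_kind = TriN | TriJ | Tri0 | LevN | LevL

fun frame_routes :: "frame_kind \<Rightarrow> route set" where
  "frame_routes TriN = {LR, RC, LC, LqR, RqC, qLC}"
| "frame_routes TriJ = {LR, RC, LC, LqL, qCC, qRR}"
| "frame_routes Tri0 = {LR, RC, LC}"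
| "frame_routes LevN = {SL, LC, SR, RC, SqL, qLC, SqR, RqC}"
| "frame_routes LevL = {SL, LC, SR, RC, SC}"

fun frame_slots :: "frame_kind \<Rightarrow> slot set" where
  "frame_slots TriN = {pL, pR, pC, qL, qR, qC}"
| "frame_slots TriJ = {pL, pR, pC, qL, qR, qC}"
| "frame_slots Tri0 = {pL, pR, pC}"
| "frame_slots LevN = {pS, pL, pR, pC, qL, qR, qC}"
| "frame_slots LevL = {pS, pL, pR, pC}"

locale frame_box =
  fixes xL xR yB yT hh :: real
  assumes wide: "xR - xL \<ge> 16" and layer_ge: "hh \<ge> 2 * (xR - xL) + 20" and tall: "yT - yB \<ge> 3 * hh"
begin

fun slot_x :: "slot \<Rightarrow> real" where
  "slot_x pS = xL + 4" | "slot_x pL = xL" | "slot_x pR = xR" | "slot_x pC = xR"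
| "slot_x qL = xL + 4" | "slot_x qR = xR - 4" | "slot_x qC = xR - 4"

fun slot_y :: "slot \<Rightarrow> real" where
  "slot_y pS = yB" | "slot_y pL = yB + 4" | "slot_y pR = yT - hh - 4" | "slot_y pC = yT"
| "slot_y qL = yB + hh + 4" | "slot_y qR = yT - 2 * hh - 4" | "slot_y qC = yT - hh"

fun route_x :: "route \<Rightarrow> real \<Rightarrow> real" where
  "route_x SL h = xL + 4 - (h - yB)"
| "route_x LC h = max (min (xL + 2) (xL + h / 2 - yB / 2 - 2)) (xR - 2 * (yT - h))"
| "route_x SR h = max (min (xR - 2) (xL + 4 + (h - yB))) (xR - (yT - hh - 4 - h))"
| "route_x RC h = xR"
| "route_x SqL h = xL + 4"
| "route_x qLC h = max (xL + 4) (xR - (yT - h))"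
| "route_x SqR h = min (min (xR - 3) (xL + 4 + h / 2 - yB / 2)) (xR - 4 + (yT - 2 * hh - 4 - h))"
| "route_x RqC h = xR - (h - (yT - hh - 4))"
| "route_x SC h = max (xL + 4) (xR - (yT - h))"
| "route_x LR h = min xR (xL + 2 * (h - yB - 4))"
| "route_x LqR h = min (min (xR - 3) (xL + (h - yB - 4))) (xR - 4 + (yT - 2 * hh - 4 - h))"
| "route_x LqL h = min (xL + 4) (xL + (h - yB - 4))"
| "route_x qCC h = max (xR - 4) (xR - (yT - h))"
| "route_x qRR h = max (min (xR - 2) (xR - 4 + (h - (yT - 2 * hh - 4)))) (xR - (yT - hh - 4 - h))"

definition on_route :: "route \<Rightarrow> real \<Rightarrow> bool" where
  "on_route k h \<longleftrightarrow> slot_y (route_src k) \<le> h \<and> h \<le> slot_y (route_dst k)"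

lemma route_x_src: "route_x k (slot_y (route_src k)) = slot_x (route_src k)"
  using wide layer_ge tall
  by (cases k) (auto simp: min_def max_def add_divide_distrib diff_divide_distrib split: if_splits; linarith)+

lemma route_x_dst: "route_x k (slot_y (route_dst k)) = slot_x (route_dst k)"
  using wide layer_ge tall
  by (cases k) (auto simp: min_def max_def add_divide_distrib diff_divide_distrib split: if_splits; linarith)+

lemma route_src_below_dst: "slot_y (route_src k) < slot_y (route_dst k)"
  using wide layer_ge tall by (cases k) auto

lemma route_x_cont: "continuous_on A (route_x k)"
  by (cases k) (auto intro!: continuous_intros)

lemma route_in_box: "on_route k h \<Longrightarrow> xL \<le> route_x k h \<and> route_x k h \<le> xR \<and> yB \<le> h \<and> h \<le> yT"
  unfolding on_route_def using wide layer_ge tall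
  by (cases k) (auto simp: min_def max_def add_divide_distrib diff_divide_distrib split: if_splits; linarith)+

lemma route_on_left_side:
  "on_route k h \<Longrightarrow> route_x k h \<le> xL \<Longrightarrow> h = slot_y pL \<and> (route_src k = pL \<or> route_dst k = pL)"
  unfolding on_route_def using wide layer_ge tall
  by (cases k) (auto simp: min_def max_def add_divide_distrib diff_divide_distrib split: if_splits; linarith)+

lemma route_in_inner_region:
  "k \<noteq> SC \<Longrightarrow> on_route k h \<Longrightarrow> xL + 4 \<le> route_x k h \<Longrightarrow> route_x k h \<le> xR - 4 \<Longrightarrow>
    yB + hh \<le> h \<Longrightarrow> h \<le> yT - hh \<Longrightarrow>
    route_x k h = xL + 4 \<or> (route_x k h = xR - 4 \<and> h \<in> {slot_y qR, slot_y qC})"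
  unfolding on_route_def using wide layer_ge tall
  by (cases k) (auto simp: min_def max_def add_divide_distrib diff_divide_distrib split: if_splits; linarith)+

definition routes_cross_inside :: "route \<Rightarrow> route \<Rightarrow> bool" where
  "routes_cross_inside k1 k2 \<longleftrightarrow> (\<exists>h. slot_y (route_src k1) < h \<and> h < slot_y (route_dst k1) \<and>
     slot_y (route_src k2) < h \<and> h < slot_y (route_dst k2) \<and> route_x k1 h = route_x k2 h)"

lemma frame_routes_not_cross_inside:
  "k1 \<in> frame_routes F \<Longrightarrow> k2 \<in> frame_routes F \<Longrightarrow> k1 \<noteq> k2 \<Longrightarrow> \<not> routes_cross_inside k1 k2"
  unfolding routes_cross_inside_def using wide layer_ge tall
  by (cases F; cases k1; cases k2)
    (auto simp: min_def max_def add_divide_distrib diff_divide_distrib split: if_splits; linarith)+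

lemma frame_route_avoids_slots:
  "k \<in> frame_routes F \<Longrightarrow> p \<in> frame_slots F \<Longrightarrow> p \<noteq> route_src k \<Longrightarrow> p \<noteq> route_dst k \<Longrightarrow>
    \<not> (on_route k (slot_y p) \<and> route_x k (slot_y p) = slot_x p)"
  unfolding on_route_def using wide layer_ge tall
  by (cases F; cases k; cases p) (auto simp: min_def max_def add_divide_distrib diff_divide_distrib split: if_splits; linarith)+

end

lemma card_le_2_misses_pair:
  assumes "finite S" "card S \<le> 2"
    and "x1 \<noteq> x2" "x1 \<noteq> x3" "x2 \<noteq> x3" "y1 \<noteq> y2" "y1 \<noteq> y3" "y2 \<noteq> y3"
    and "x1 \<noteq> y2" "x1 \<noteq> y3" "x2 \<noteq> y1" "x2 \<noteq> y3" "x3 \<noteq> y1" "x3 \<noteq> y2"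
  shows "(x1 \<notin> S \<and> y1 \<notin> S) \<or> (x2 \<notin> S \<and> y2 \<notin> S) \<or> (x3 \<notin> S \<and> y3 \<notin> S)"
proof (rule ccontr)
  assume "\<not> ?thesis"
  then obtain s1 s2 s3 where s: "s1 \<in> S" "s2 \<in> S" "s3 \<in> S"
    "s1 \<in> {x1, y1}" "s2 \<in> {x2, y2}" "s3 \<in> {x3, y3}"
    by blast
  hence "card {s1, s2, s3} = 3" using assms(3-) by auto
  moreover have "card {s1, s2, s3} \<le> card S" by (rule card_mono) (use s assms(1) in auto)
  ultimately show False using assms(2) by simp
qed

locale family =
  fixes T L :: nat
  assumes T_pos: "0 < T"
begin

definition tb :: "nat \<Rightarrow> nat" where "tb i = 3 * i"
definition tm :: "nat \<Rightarrow> nat" where "tm i = 3 * i + 1"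
definition tt :: "nat \<Rightarrow> nat" where "tt i = 3 * i + 2"
definition ls :: "nat \<Rightarrow> nat" where "ls k = 3 * T + 4 * k"
definition lt :: "nat \<Rightarrow> nat" where "lt k = 3 * T + 4 * k + 1"
definition la :: "nat \<Rightarrow> nat" where "la k = 3 * T + 4 * k + 2"
definition lb :: "nat \<Rightarrow> nat" where "lb k = 3 * T + 4 * k + 3"

lemmas vertex_defs = tb_def tm_def tt_def ls_def lt_def la_def lb_def

lemma vertex_inj [simp]:
  "tb i = tb j \<longleftrightarrow> i = j" "tm i = tm j \<longleftrightarrow> i = j" "tt i = tt j \<longleftrightarrow> i = j"
  "ls i = ls j \<longleftrightarrow> i = j" "lt i = lt j \<longleftrightarrow> i = j" "la i = la j \<longleftrightarrow> i = j" "lb i = lb j \<longleftrightarrow> i = j"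
  unfolding vertex_defs by auto

lemma vertex_distinct [simp]:
  "tb i \<noteq> tm j" "tb i \<noteq> tt j" "tm i \<noteq> tt j" "tm i \<noteq> tb j" "tt i \<noteq> tb j" "tt i \<noteq> tm j"
  "ls i \<noteq> lt j" "ls i \<noteq> la j" "ls i \<noteq> lb j" "lt i \<noteq> la j" "lt i \<noteq> lb j" "la i \<noteq> lb j"
  "lt i \<noteq> ls j" "la i \<noteq> ls j" "lb i \<noteq> ls j" "la i \<noteq> lt j" "lb i \<noteq> lt j" "lb i \<noteq> la j"
  unfolding vertex_defs by presburger+

lemma triangle_level_distinct [simp]:
  assumes "i < T"
  shows "tb i \<noteq> ls k" "tb i \<noteq> lt k" "tb i \<noteq> la k" "tb i \<noteq> lb k"
    "tm i \<noteq> ls k" "tm i \<noteq> lt k" "tm i \<noteq> la k" "tm i \<noteq> lb k"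
    "tt i \<noteq> ls k" "tt i \<noteq> lt k" "tt i \<noteq> la k" "tt i \<noteq> lb k"
    "ls k \<noteq> tb i" "lt k \<noteq> tb i" "la k \<noteq> tb i" "lb k \<noteq> tb i"
    "ls k \<noteq> tm i" "lt k \<noteq> tm i" "la k \<noteq> tm i" "lb k \<noteq> tm i"
    "ls k \<noteq> tt i" "lt k \<noteq> tt i" "la k \<noteq> tt i" "lb k \<noteq> tt i"
  using assms unfolding vertex_defs by simp_all

definition V :: "nat set" where "V = {0..<3 * T + 4 * L}"

lemma card_V: "card V = 3 * T + 4 * L"
  unfolding V_def by simp

lemma vertices_in_V:
  "i < T \<Longrightarrow> tb i \<in> V" "i < T \<Longrightarrow> tm i \<in> V" "i < T \<Longrightarrow> tt i \<in> V"
  "k < L \<Longrightarrow> ls k \<in> V" "k < L \<Longrightarrow> lt k \<in> V" "k < L \<Longrightarrow> la k \<in> V" "k < L \<Longrightarrow> lb k \<in> V"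
  unfolding V_def vertex_defs by auto

lemma V_cases:
  assumes "v \<in> V"
  obtains (tb) i where "i < T" "v = tb i" | (tm) i where "i < T" "v = tm i"
    | (tt) i where "i < T" "v = tt i" | (ls) k where "k < L" "v = ls k"
    | (lt) k where "k < L" "v = lt k" | (la) k where "k < L" "v = la k"
    | (lb) k where "k < L" "v = lb k"
proof (cases "v < 3 * T")
  case True
  define i where "i = v div 3"
  have "i < T" using True unfolding i_def by auto
  moreover have "v = 3 * i \<or> v = 3 * i + 1 \<or> v = 3 * i + 2" unfolding i_def by presburger
  ultimately show ?thesis using that(1-3) unfolding vertex_defs by blast
next
  case False
  define k where "k = (v - 3 * T) div 4"
  have "k < L" using False assms unfolding k_def V_def by auto
  moreover have "v = 3 * T + 4 * k \<or> v = 3 * T + 4 * k + 1 \<or> v = 3 * T + 4 * k + 2 \<or> v = 3 * T + 4 * k + 3"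
    using False unfolding k_def by presburger
  ultimately show ?thesis using that(4-7) unfolding vertex_defs by blast
qed

text \<open>Each edge comes with the frame j and the route in which it is drawn below.\<close>
inductive routed :: "nat \<times> nat \<Rightarrow> nat \<Rightarrow> route \<Rightarrow> bool" where
  "i < T \<Longrightarrow> routed (tb i, tm i) i LR"
| "i < T \<Longrightarrow> routed (tm i, tt i) i RC"
| "i < T \<Longrightarrow> routed (tb i, tt i) i LC"
| "Suc i < T \<Longrightarrow> routed (tb i, tm (Suc i)) i LqR"
| "Suc i < T \<Longrightarrow> routed (tm i, tt (Suc i)) i RqC"
| "Suc i < T \<Longrightarrow> routed (tb (Suc i), tt i) i qLC"
| "0 < L \<Longrightarrow> routed (tb (T - 1), la 0) (T - 1) LqL"
| "0 < L \<Longrightarrow> routed (lt 0, tt (T - 1)) (T - 1) qCC"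
| "0 < L \<Longrightarrow> routed (lb 0, tm (T - 1)) (T - 1) qRR"
| "k < L \<Longrightarrow> routed (ls k, la k) (T + k) SL"
| "k < L \<Longrightarrow> routed (la k, lt k) (T + k) LC"
| "k < L \<Longrightarrow> routed (ls k, lb k) (T + k) SR"
| "k < L \<Longrightarrow> routed (lb k, lt k) (T + k) RC"
| "Suc k < L \<Longrightarrow> routed (ls k, la (Suc k)) (T + k) SqL"
| "Suc k < L \<Longrightarrow> routed (la (Suc k), lt k) (T + k) qLC"
| "Suc k < L \<Longrightarrow> routed (ls k, lb (Suc k)) (T + k) SqR"
| "Suc k < L \<Longrightarrow> routed (lb k, lt (Suc k)) (T + k) RqC"
| "0 < L \<Longrightarrow> routed (ls (L - 1), lt (L - 1)) (T + L - 1) SC"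

definition E :: "(nat \<times> nat) set" where "E = {e. \<exists>j k. routed e j k}"

lemma E_iff: "e \<in> E \<longleftrightarrow> (\<exists>j k. routed e j k)"
  unfolding E_def by simp

lemma triangle_edges: assumes "i < T" shows "(tb i, tm i) \<in> E" "(tm i, tt i) \<in> E" "(tb i, tt i) \<in> E"
  using assms unfolding E_iff by (blast intro: routed.intros)+

lemma triangle_link_edges: assumes "Suc i < T"
  shows "(tb i, tm (Suc i)) \<in> E" "(tm i, tt (Suc i)) \<in> E" "(tb (Suc i), tt i) \<in> E"
  using assms unfolding E_iff by (blast intro: routed.intros)+

lemma junction_edges: assumes "0 < L"
  shows "(tb (T - 1), la 0) \<in> E" "(lt 0, tt (T - 1)) \<in> E" "(lb 0, tm (T - 1)) \<in> E"
  using assms unfolding E_iff by (blast intro: routed.intros)+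

lemma level_edges: assumes "k < L"
  shows "(ls k, la k) \<in> E" "(la k, lt k) \<in> E" "(ls k, lb k) \<in> E" "(lb k, lt k) \<in> E"
  using assms unfolding E_iff by (blast intro: routed.intros)+

lemma level_link_edges: assumes "Suc k < L"
  shows "(ls k, la (Suc k)) \<in> E" "(la (Suc k), lt k) \<in> E" "(ls k, lb (Suc k)) \<in> E" "(lb k, lt (Suc k)) \<in> E"
  using assms unfolding E_iff by (blast intro: routed.intros)+

lemma last_level_edge: "0 < L \<Longrightarrow> (ls (L - 1), lt (L - 1)) \<in> E"
  unfolding E_iff by (blast intro: routed.intros)

lemma E_subset: "E \<subseteq> V \<times> V"
  using T_pos by (auto simp: E_iff vertices_in_V elim!: routed.cases)

lemma finite_E: "finite E"
  using finite_subset[OF E_subset] unfolding V_def by auto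

definition rank :: "nat \<Rightarrow> nat" where
  "rank v = (if v < 3 * T then (if v mod 3 = 0 then 0 else if v mod 3 = 2 then 3
                               else if v div 3 = T - 1 \<and> 0 < L then 2 else 1)
             else (if (v - 3 * T) mod 4 = 0 then 0 else if (v - 3 * T) mod 4 = 1 then 2 else 1))"

lemma rank_simps:
  "i < T \<Longrightarrow> rank (tb i) = 0" "i < T \<Longrightarrow> rank (tt i) = 3"
  "i < T \<Longrightarrow> rank (tm i) = (if i = T - 1 \<and> 0 < L then 2 else 1)"
  "rank (ls k) = 0" "rank (lt k) = 2" "rank (la k) = 1" "rank (lb k) = 1"
proof -
  have tri: "(3 * i) mod 3 = 0" "(3 * i + 1) mod 3 = 1" "(3 * i + 2) mod 3 = 2" "(3 * i + 1) div 3 = i"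
    for i :: nat by presburger+
  have lev: "(4 * k) mod 4 = 0" "(4 * k + 1) mod 4 = 1" "(4 * k + 2) mod 4 = 2" "(4 * k + 3) mod 4 = 3"
    for k :: nat by presburger+
  show "i < T \<Longrightarrow> rank (tb i) = 0" "i < T \<Longrightarrow> rank (tt i) = 3"
    "i < T \<Longrightarrow> rank (tm i) = (if i = T - 1 \<and> 0 < L then 2 else 1)"
    unfolding rank_def vertex_defs by (simp_all only: tri) auto
  show "rank (ls k) = 0" "rank (lt k) = 2" "rank (la k) = 1" "rank (lb k) = 1"
  proof -
    have "\<not> ls k < 3 * T" "\<not> lt k < 3 * T" "\<not> la k < 3 * T" "\<not> lb k < 3 * T"
      "ls k - 3 * T = 4 * k" "lt k - 3 * T = 4 * k + 1" "la k - 3 * T = 4 * k + 2" "lb k - 3 * T = 4 * k + 3"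
      unfolding vertex_defs by auto
    thus "rank (ls k) = 0" "rank (lt k) = 2" "rank (la k) = 1" "rank (lb k) = 1"
      unfolding rank_def by (simp_all only: lev if_False) simp_all
  qed
qed

lemma rank_edge: "e \<in> E \<Longrightarrow> rank (fst e) < rank (snd e)"
  using T_pos by (auto simp: E_iff rank_simps elim!: routed.cases)

lemma rank_le_3: "rank v \<le> 3"
  unfolding rank_def by auto

lemma is_dag: "is_dag V E"
proof -
  have "(u, v) \<in> E\<^sup>+ \<Longrightarrow> rank u < rank v" for u v
    by (induction rule: trancl_induct) (use rank_edge in fastforce)+
  hence "acyclic E" unfolding acyclic_def by blast
  thus ?thesis unfolding is_dag_def using E_subset by (simp add: V_def)
qed

lemma dir_path_length: assumes "dir_path V E xs" shows "length xs - 1 \<le> 3"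
proof -
  have ne: "xs \<noteq> []" and edges: "\<And>i. Suc i < length xs \<Longrightarrow> (xs ! i, xs ! Suc i) \<in> E"
    using assms unfolding dir_path_def by auto
  have "i \<le> rank (xs ! i)" if "i < length xs" for i
    using that by (induction i) (use rank_edge[OF edges] in fastforce)+
  from this[of "length xs - 1"] show ?thesis using ne rank_le_3[of "xs ! (length xs - 1)"] by simp
qed

lemma degree_le_4I:
  assumes "\<And>e. e \<in> E \<Longrightarrow> fst e = v \<or> snd e = v \<Longrightarrow> e \<in> {e1, e2, e3, e4}"
  shows "degree E v \<le> 4"
proof -
  have "degree E v \<le> card {e1, e2, e3, e4}"
    unfolding degree_def by (rule card_mono) (use assms in auto)
  also have "\<dots> \<le> 4" by (simp add: card_insert_if)
  finally show ?thesis .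
qed

lemma degree_le_4: assumes "v \<in> V" shows "degree E v \<le> 4"
  using assms
proof (cases rule: V_cases)
  case (tb i) show ?thesis
    unfolding tb(2) by (rule degree_le_4I[of _ "(tb i, tm i)" "(tb i, tt i)" "(tb i, if Suc i < T then tm (Suc i) else la 0)"
          "(tb i, tt (i - 1))"])
      (use tb(1) T_pos in \<open>unfold E_iff, elim exE routed.cases, auto\<close>)
next
  case (tm i) show ?thesis
    unfolding tm(2) by (rule degree_le_4I[of _ "(tb i, tm i)" "(tm i, tt i)" "(tb (i - 1), tm i)"
          "if Suc i < T then (tm i, tt (Suc i)) else (lb 0, tm i)"])
      (use tm(1) T_pos in \<open>unfold E_iff, elim exE routed.cases, auto\<close>)
next
  case (tt i) show ?thesis
    unfolding tt(2) by (rule degree_le_4I[of _ "(tm i, tt i)" "(tb i, tt i)" "(tm (i - 1), tt i)"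
          "if Suc i < T then (tb (Suc i), tt i) else (lt 0, tt i)"])
      (use tt(1) T_pos in \<open>unfold E_iff, elim exE routed.cases, auto\<close>)
next
  case (ls k) show ?thesis
    unfolding ls(2) by (rule degree_le_4I[of _ "(ls k, la k)" "(ls k, lb k)" "(ls k, if Suc k < L then la (Suc k) else lt k)"
          "(ls k, lb (Suc k))"])
      (use ls(1) T_pos in \<open>unfold E_iff, elim exE routed.cases, auto\<close>)
next
  case (lt k) show ?thesis
    unfolding lt(2) by (rule degree_le_4I[of _ "(la k, lt k)" "(lb k, lt k)"
          "if Suc k < L then (la (Suc k), lt k) else (ls k, lt k)"
          "if k = 0 then (lt 0, tt (T - 1)) else (lb (k - 1), lt k)"])
      (use lt(1) T_pos in \<open>unfold E_iff, elim exE routed.cases, auto\<close>)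
next
  case (la k) show ?thesis
    unfolding la(2) by (rule degree_le_4I[of _ "(ls k, la k)" "(la k, lt k)"
          "if k = 0 then (tb (T - 1), la 0) else (ls (k - 1), la k)" "(la k, lt (k - 1))"])
      (use la(1) T_pos in \<open>unfold E_iff, elim exE routed.cases, auto\<close>)
next
  case (lb k) show ?thesis
    unfolding lb(2) by (rule degree_le_4I[of _ "(ls k, lb k)" "(lb k, lt k)"
          "if k = 0 then (lb 0, tm (T - 1)) else (ls (k - 1), lb k)" "(lb k, lt (Suc k))"])
      (use lb(1) T_pos in \<open>unfold E_iff, elim exE routed.cases, auto\<close>)
qed

context
  fixes S :: "nat set"
  assumes S_subset: "S \<subseteq> V" and card_S: "card S \<le> 2"
begin

definition link :: "(nat \<times> nat) set" where
  "link = {(u, v). u \<in> V - S \<and> v \<in> V - S \<and> und_adj E u v}"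

lemma finite_S: "finite S"
  using S_subset finite_subset unfolding V_def by blast

lemma S_eq_pair: assumes "x \<in> S" "y \<in> S" "x \<noteq> y" shows "S = {x, y}"
proof -
  have "{x, y} \<subseteq> S" "card {x, y} = 2" using assms by auto
  thus ?thesis using card_seteq[OF finite_S] card_S by (metis order_refl)
qed

lemma link_rtrancl_sym: "(u, v) \<in> link\<^sup>* \<Longrightarrow> (v, u) \<in> link\<^sup>*"
proof -
  have "sym link" unfolding sym_def link_def und_adj_def by auto
  thus "(u, v) \<in> link\<^sup>* \<Longrightarrow> (v, u) \<in> link\<^sup>*" using sym_rtrancl unfolding sym_def by blast
qed

lemma edge_in_link: "und_adj E u v \<Longrightarrow> u \<notin> S \<Longrightarrow> v \<notin> S \<Longrightarrow> (u, v) \<in> link\<^sup>*"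
  using E_subset unfolding link_def und_adj_def by blast

definition reaches_base :: "nat \<Rightarrow> bool" where
  "reaches_base x \<longleftrightarrow> (\<exists>r \<in> {tb 0, tm 0, tt 0} - S. (x, r) \<in> link\<^sup>*)"

lemma reaches_base_link: "(x, y) \<in> link\<^sup>* \<Longrightarrow> reaches_base y \<Longrightarrow> reaches_base x"
  unfolding reaches_base_def by (meson rtrancl_trans)

lemma reaches_base_edge: "und_adj E x y \<Longrightarrow> x \<notin> S \<Longrightarrow> y \<notin> S \<Longrightarrow> reaches_base y \<Longrightarrow> reaches_base x"
  using reaches_base_link edge_in_link by blast

lemma triangle_reaches_base: "i < T \<Longrightarrow> x \<in> {tb i, tm i, tt i} - S \<Longrightarrow> reaches_base x"
proof (induction i arbitrary: x)
  case 0 thus ?case unfolding reaches_base_def by blast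
next
  case (Suc i)
  have "(tb (Suc i) \<notin> S \<and> tt i \<notin> S) \<or> (tm (Suc i) \<notin> S \<and> tb i \<notin> S) \<or> (tt (Suc i) \<notin> S \<and> tm i \<notin> S)"
    by (rule card_le_2_misses_pair[OF finite_S card_S]) auto
  then obtain x' y' where xy: "x' \<in> {tb (Suc i), tm (Suc i), tt (Suc i)} - S" "y' \<in> {tb i, tm i, tt i} - S"
    "und_adj E x' y'"
    using triangle_link_edges[OF Suc.prems(1)] unfolding und_adj_def by blast
  have x': "x' \<in> {tb (Suc i), tm (Suc i), tt (Suc i)} - S" "reaches_base x'"
    using xy reaches_base_edge Suc.IH[OF _ xy(2)] Suc.prems(1) by auto
  have "und_adj E x x'" if "x \<noteq> x'"
    using that x'(1) Suc.prems triangle_edges[OF Suc.prems(1)] unfolding und_adj_def by auto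
  thus ?case using x' Suc.prems(2) reaches_base_edge by (cases "x = x'") auto
qed

lemma level_cycle_link:
  assumes k: "k < L" and nd: "\<not> (ls k \<in> S \<and> lt k \<in> S)" "\<not> (la k \<in> S \<and> lb k \<in> S)"
    and x: "x \<in> {ls k, lt k, la k, lb k} - S" and z: "z \<in> {ls k, lt k, la k, lb k} - S"
  shows "(x, z) \<in> link\<^sup>*"
proof -
  have adj: "und_adj E (ls k) (la k)" "und_adj E (la k) (lt k)" "und_adj E (ls k) (lb k)" "und_adj E (lb k) (lt k)"
    using level_edges[OF k] unfolding und_adj_def by auto
  have st: "(ls k, lt k) \<in> link\<^sup>*" if "ls k \<notin> S" "lt k \<notin> S"
    using nd(2) that adj edge_in_link rtrancl_trans by metis
  have ab: "(la k, lb k) \<in> link\<^sup>*" if "la k \<notin> S" "lb k \<notin> S"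
    using nd(1) that adj edge_in_link link_rtrancl_sym rtrancl_trans by metis
  have "(x, z) \<in> link\<^sup>* \<or> (z, x) \<in> link\<^sup>*"
    using x z adj st ab edge_in_link by auto
  thus ?thesis using link_rtrancl_sym by blast
qed

lemma level_source_reaches_base:
  assumes k: "k < L" and S: "S = {la k, lb k}" and lt: "reaches_base (lt k)"
  shows "reaches_base (ls k)"
proof (cases "Suc k < L")
  case True
  have adj: "und_adj E (la (Suc k)) (lt k)" "und_adj E (ls k) (la (Suc k))"
    using level_link_edges[OF True] unfolding und_adj_def by auto
  have out: "ls k \<notin> S" "lt k \<notin> S" "la (Suc k) \<notin> S" using S by auto
  show ?thesis using reaches_base_edge[OF adj(2) out(1,3) reaches_base_edge[OF adj(1) out(3,2) lt]] .
next
  case False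
  hence "L - 1 = k" using k by simp
  hence "und_adj E (ls k) (lt k)" using last_level_edge k unfolding und_adj_def by auto
  moreover have "ls k \<notin> S" "lt k \<notin> S" using S by auto
  ultimately show ?thesis using reaches_base_edge lt by blast
qed

lemma level_reaches_base_via:
  assumes k: "k < L"
    and links: "und_adj E (la k) a" "und_adj E (lb k) b" "und_adj E (lt k) c"
    and outside: "{a, b, c} \<inter> {ls k, lt k, la k, lb k} = {}" "distinct [a, b, c]"
    and reach: "\<And>v. v \<in> {a, b, c} - S \<Longrightarrow> reaches_base v"
    and x: "x \<in> {ls k, lt k, la k, lb k} - S"
  shows "reaches_base x"
proof -
  have via: "la k \<notin> S \<Longrightarrow> a \<notin> S \<Longrightarrow> reaches_base (la k)"
    "lb k \<notin> S \<Longrightarrow> b \<notin> S \<Longrightarrow> reaches_base (lb k)"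
    "lt k \<notin> S \<Longrightarrow> c \<notin> S \<Longrightarrow> reaches_base (lt k)"
    using links reach reaches_base_edge by blast+
  consider (st) "ls k \<in> S" "lt k \<in> S" | (ab) "la k \<in> S" "lb k \<in> S"
    | (cycle) "\<not> (ls k \<in> S \<and> lt k \<in> S)" "\<not> (la k \<in> S \<and> lb k \<in> S)" by blast
  thus ?thesis
  proof cases
    case st
    hence S: "S = {ls k, lt k}" using S_eq_pair by simp
    hence "a \<notin> S" "b \<notin> S" using outside(1) by auto
    thus ?thesis using x via(1,2) S by auto
  next
    case ab
    hence S: "S = {la k, lb k}" using S_eq_pair by simp
    hence "c \<notin> S" using outside(1) by auto
    hence lt: "reaches_base (lt k)" using via(3) S by simp
    have "reaches_base (ls k)" by (rule level_source_reaches_base[OF k S lt])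
    thus ?thesis using x lt S by auto
  next
    case cycle
    have "(la k \<notin> S \<and> a \<notin> S) \<or> (lb k \<notin> S \<and> b \<notin> S) \<or> (lt k \<notin> S \<and> c \<notin> S)"
      by (rule card_le_2_misses_pair[OF finite_S card_S]) (use outside in auto)
    then obtain z where "z \<in> {ls k, lt k, la k, lb k} - S" "reaches_base z" using via by blast
    thus ?thesis using level_cycle_link[OF k cycle x] reaches_base_link by blast
  qed
qed

lemma level_reaches_base: "k < L \<Longrightarrow> x \<in> {ls k, lt k, la k, lb k} - S \<Longrightarrow> reaches_base x"
proof (induction k arbitrary: x)
  case 0
  have "T - 1 < T" using T_pos by simp
  show ?case
  proof (rule level_reaches_base_via[OF 0(1) _ _ _ _ _ _ 0(2)])
    show "und_adj E (la 0) (tb (T - 1))" "und_adj E (lb 0) (tm (T - 1))" "und_adj E (lt 0) (tt (T - 1))"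
      using junction_edges 0(1) unfolding und_adj_def by auto
  qed (use \<open>T - 1 < T\<close> triangle_reaches_base in auto)
next
  case (Suc k)
  show ?case
  proof (rule level_reaches_base_via[OF Suc.prems(1) _ _ _ _ _ _ Suc.prems(2)])
    show "und_adj E (la (Suc k)) (lt k)" "und_adj E (lb (Suc k)) (ls k)" "und_adj E (lt (Suc k)) (lb k)"
      using level_link_edges Suc.prems(1) unfolding und_adj_def by auto
  qed (use Suc.IH Suc.prems(1) in auto)
qed

lemma connected_without_S: "und_connected_on E (V - S)"
  unfolding und_connected_on_def
proof (intro ballI)
  fix x z assume "x \<in> V - S" "z \<in> V - S"
  hence "reaches_base x" "reaches_base z"
    by (auto elim!: V_cases intro: triangle_reaches_base level_reaches_base)
  then obtain r1 r2 where r: "r1 \<in> {tb 0, tm 0, tt 0} - S" "(x, r1) \<in> link\<^sup>*"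
    "r2 \<in> {tb 0, tm 0, tt 0} - S" "(z, r2) \<in> link\<^sup>*"
    unfolding reaches_base_def by blast
  have "(r1, r2) \<in> link\<^sup>*"
    using r(1,3) triangle_edges[OF T_pos] edge_in_link unfolding und_adj_def by (cases "r1 = r2") auto
  hence "(x, z) \<in> link\<^sup>*" using r(2) link_rtrancl_sym[OF r(4)] by (meson rtrancl_trans)
  thus "(x, z) \<in> {(u, v). u \<in> V - S \<and> v \<in> V - S \<and> und_adj E u v}\<^sup>*" unfolding link_def .
qed

end

lemma three_connected: "three_connected V E"
  unfolding three_connected_def using card_V T_pos connected_without_S by auto

context
  fixes xp :: "nat \<Rightarrow> real" and y :: "nat \<Rightarrow> int" and c :: "nat \<times> nat \<Rightarrow> real \<Rightarrow> real \<times> real"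
  assumes drawing: "upward_planar_layered_drawing V E xp y c"
begin

interpretation D: upward_drawing V E xp y c
  using drawing by unfold_locales

text \<open>The side vertex m is joined, avoiding the boundary of the lens, to a vertex that
  lies outside it: to ls (k - 1), which is below ls k, or for k = 0 through the last triangle
  to tt (T - 1), which is above lt 0.\<close>
lemma level_side_not_in_lens:
  assumes k: "Suc k < L" and below: "k = 0 \<or> y (ls (k - 1)) < y (ls k)"
    and m: "m \<in> {la k, lb k}" and w: "w \<in> {la k, lb k}" "w \<noteq> m"
  shows "\<not> D.in_lens (ls k) w (la (Suc k)) (lt k) (xp m) (D.yr m)"
proof
  assume ins: "D.in_lens (ls k) w (la (Suc k)) (lt k) (xp m) (D.yr m)"
  have l: "(ls k, w) \<in> E" "(w, lt k) \<in> E" "(ls k, la (Suc k)) \<in> E" "(la (Suc k), lt k) \<in> E"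
    using w level_edges[of k] level_link_edges[OF k] k by auto
  have m_out: "m \<notin> {ls k, w, la (Suc k), lt k}" using m w by auto
  show False
  proof (cases k)
    case 0
    have T1: "T - 1 < T" using T_pos by simp
    obtain r where r: "und_adj E m r" "und_adj E r (tt (T - 1))" "r \<in> {tb (T - 1), tm (T - 1)}"
      using m junction_edges[of] triangle_edges[OF T1] k 0 unfolding und_adj_def by auto
    have out: "r \<notin> {ls k, w, la (Suc k), lt k}" "tt (T - 1) \<notin> {ls k, w, la (Suc k), lt k}"
      using r(3) w T1 by auto
    have "D.in_lens (ls k) w (la (Suc k)) (lt k) (xp r) (D.yr r)"
      by (rule D.in_lens_neighbour[OF l r(1) m_out out(1) ins])
    hence "D.in_lens (ls k) w (la (Suc k)) (lt k) (xp (tt (T - 1))) (D.yr (tt (T - 1)))"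
      by (rule D.in_lens_neighbour[OF l r(2) out])
    hence "y (tt (T - 1)) < y (lt 0)" unfolding D.in_lens_def 0 by simp
    thus False using D.edge_up[OF junction_edges(2)] k by simp
  next
    case (Suc k')
    have "und_adj E m (ls k')" using m level_link_edges[of k'] k Suc unfolding und_adj_def by auto
    moreover have "ls k' \<notin> {ls k, w, la (Suc k), lt k}" using w Suc by auto
    ultimately have "D.in_lens (ls k) w (la (Suc k)) (lt k) (xp (ls k')) (D.yr (ls k'))"
      using D.in_lens_neighbour[OF l _ m_out _ ins] by blast
    hence "y (ls k) < y (ls k')" unfolding D.in_lens_def by simp
    thus False using below Suc by simp
  qed
qed

lemma level_nested_step:
  assumes k: "Suc k < L" and below: "k = 0 \<or> y (ls (k - 1)) < y (ls k)"
  shows "y (ls k) < y (ls (Suc k)) \<and> y (lt (Suc k)) < y (lt k)"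
proof -
  have l: "(ls k, la k) \<in> E" "(la k, lt k) \<in> E" "(ls k, lb k) \<in> E" "(lb k, lt k) \<in> E"
    using level_edges k by auto
  have "D.in_lens (ls k) (la k) (lb k) (lt k) (xp (la (Suc k))) (D.yr (la (Suc k)))"
    using D.theta_in_lens[OF l(1,2) l(3,4) level_link_edges(1,2)[OF k]]
      level_side_not_in_lens[OF k below, of "la k" "lb k"] level_side_not_in_lens[OF k below, of "lb k" "la k"]
    by (auto simp: D.in_lens_sym)
  moreover have "und_adj E (la (Suc k)) (ls (Suc k))" "und_adj E (la (Suc k)) (lt (Suc k))"
    using level_edges[of "Suc k"] k unfolding und_adj_def by auto
  ultimately have "D.in_lens (ls k) (la k) (lb k) (lt k) (xp v) (D.yr v)" if "v \<in> {ls (Suc k), lt (Suc k)}" for v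
    using D.in_lens_neighbour[OF l] that by auto
  thus ?thesis unfolding D.in_lens_def by auto
qed

lemma levels_nested: "Suc k < L \<Longrightarrow> y (ls k) < y (ls (Suc k)) \<and> y (lt (Suc k)) < y (lt k)"
proof (induction k)
  case 0 thus ?case using level_nested_step[of 0] by simp
next
  case (Suc k) thus ?case using level_nested_step[of "Suc k"] by simp
qed

lemma level_0_height: "k < L \<Longrightarrow> y (lt k) - y (ls k) + 2 * int k \<le> y (lt 0) - y (ls 0)"
  by (induction k) (use levels_nested in fastforce)+

lemma drawing_span_lower: "(if L = 0 then 2 else int L + 1) \<le> drawing_span E y"
proof (cases "L = 0")
  case True
  have "y (tt 0) - y (tb 0) \<ge> 2"
    using D.edge_up[OF triangle_edges(1)[OF T_pos]] D.edge_up[OF triangle_edges(2)[OF T_pos]] by simp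
  thus ?thesis using drawing_span_edge[OF finite_E triangle_edges(3)[OF T_pos], where y = y] True by simp
next
  case False
  have T1: "T - 1 < T" using T_pos by simp
  have "L - 1 < L" using False by simp
  from D.edge_up[OF level_edges(1)[OF this]] D.edge_up[OF level_edges(2)[OF this]]
  have "y (lt (L - 1)) - y (ls (L - 1)) \<ge> 2" by simp
  hence "y (lt 0) - y (ls 0) \<ge> 2 * int L"
    using level_0_height[of "L - 1"] False by (simp add: of_nat_diff)
  hence "(y (la 0) - y (ls 0)) + (y (tt (T - 1)) - y (tb (T - 1))) \<ge> 2 * int L + 2"
    using D.edge_up[OF junction_edges(1)] D.edge_up[OF junction_edges(2)] False by simp
  thus ?thesis
    using drawing_span_edge[OF finite_E level_edges(1), where y = y]
      drawing_span_edge[OF finite_E triangle_edges(3)[OF T1], where y = y]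
      False by fastforce
qed

end

definition frames :: nat where "frames = T + L"
definition width :: real where "width = 8 * real frames + 8"
definition layer :: int where "layer = 16 * int frames + 36"
definition height :: int where "height = (2 * int frames + 1) * layer"

definition frame_left :: "nat \<Rightarrow> real" where "frame_left j = 4 * real j"
definition frame_right :: "nat \<Rightarrow> real" where "frame_right j = width - 4 * real j"
definition frame_bot :: "nat \<Rightarrow> real" where "frame_bot j = real j * of_int layer"
definition frame_top :: "nat \<Rightarrow> real" where "frame_top j = of_int height - real j * of_int layer"

lemmas frame_defs = frame_left_def frame_right_def frame_bot_def frame_top_def

lemma layer_eq: "real_of_int layer = 2 * width + 20"
  unfolding layer_def width_def by simp

lemma layer_pos: "0 < layer"
  unfolding layer_def by simp

lemma frame_box: assumes "j < frames"
  shows "frame_box (frame_left j) (frame_right j) (frame_bot j) (frame_top j) (of_int layer)"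
proof -
  have j: "real j + 1 \<le> real frames" using assms by simp
  have "(2 * real j + 3) * of_int layer \<le> (2 * real frames + 1) * real_of_int layer"
    using j layer_pos by (intro mult_right_mono) auto
  hence "frame_top j - frame_bot j \<ge> 3 * of_int layer"
    unfolding frame_defs height_def by (simp add: algebra_simps)
  moreover have "frame_right j - frame_left j \<ge> 16" unfolding frame_defs width_def using j by simp
  moreover have "of_int layer \<ge> 2 * (frame_right j - frame_left j) + 20" unfolding frame_defs layer_eq by simp
  ultimately show ?thesis unfolding frame_box_def by simp
qed

definition slot_px :: "nat \<Rightarrow> slot \<Rightarrow> real" where
  "slot_px j = frame_box.slot_x (frame_left j) (frame_right j)"
definition slot_py :: "nat \<Rightarrow> slot \<Rightarrow> real" where
  "slot_py j = frame_box.slot_y (frame_bot j) (frame_top j) (of_int layer)"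
definition route_px :: "nat \<Rightarrow> route \<Rightarrow> real \<Rightarrow> real" where
  "route_px j = frame_box.route_x (frame_left j) (frame_right j) (frame_bot j) (frame_top j) (of_int layer)"
definition on_route_at :: "nat \<Rightarrow> route \<Rightarrow> real \<Rightarrow> bool" where
  "on_route_at j = frame_box.on_route (frame_bot j) (frame_top j) (of_int layer)"

lemma slot_px_simps:
  assumes "j < frames"
  shows "slot_px j pS = 4 * real j + 4" "slot_px j pL = 4 * real j" "slot_px j pR = width - 4 * real j"
    "slot_px j pC = width - 4 * real j" "slot_px j qL = 4 * real j + 4"
    "slot_px j qR = width - 4 * real j - 4" "slot_px j qC = width - 4 * real j - 4"
  unfolding slot_px_def frame_box.slot_x.simps[OF frame_box[OF assms]] by (simp_all add: frame_defs)

lemma slot_py_simps: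
  assumes "j < frames"
  shows "slot_py j pS = real j * of_int layer" "slot_py j pL = real j * of_int layer + 4"
    "slot_py j pR = of_int height - real j * of_int layer - of_int layer - 4"
    "slot_py j pC = of_int height - real j * of_int layer"
    "slot_py j qL = real j * of_int layer + of_int layer + 4"
    "slot_py j qR = of_int height - real j * of_int layer - 2 * of_int layer - 4"
    "slot_py j qC = of_int height - real j * of_int layer - of_int layer"
  unfolding slot_py_def frame_box.slot_y.simps[OF frame_box[OF assms]] by (simp_all add: frame_defs)

text \<open>Frame i < T holds triangle i and frame T + k holds level k.\<close>
definition frame_of :: "nat \<Rightarrow> nat" where
  "frame_of v = (if v < 3 * T then v div 3 else T + (v - 3 * T) div 4)"

definition slot_of :: "nat \<Rightarrow> slot" where
  "slot_of v = (if v < 3 * T then (if v mod 3 = 0 then pL else if v mod 3 = 1 then pR else pC)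
     else (if (v - 3 * T) mod 4 = 0 then pS else if (v - 3 * T) mod 4 = 1 then pC
       else if (v - 3 * T) mod 4 = 2 then pL else pR))"

definition vertex_at :: "nat \<Rightarrow> slot \<Rightarrow> nat" where
  "vertex_at j p = (if j < T then (case p of pL \<Rightarrow> tb j | pR \<Rightarrow> tm j | _ \<Rightarrow> tt j)
     else (case p of pS \<Rightarrow> ls (j - T) | pL \<Rightarrow> la (j - T) | pR \<Rightarrow> lb (j - T) | _ \<Rightarrow> lt (j - T)))"

lemma frame_slot_of_vertices:
  "i < T \<Longrightarrow> frame_of (tb i) = i \<and> slot_of (tb i) = pL"
  "i < T \<Longrightarrow> frame_of (tm i) = i \<and> slot_of (tm i) = pR"
  "i < T \<Longrightarrow> frame_of (tt i) = i \<and> slot_of (tt i) = pC"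
  "frame_of (ls k) = T + k \<and> slot_of (ls k) = pS" "frame_of (lt k) = T + k \<and> slot_of (lt k) = pC"
  "frame_of (la k) = T + k \<and> slot_of (la k) = pL" "frame_of (lb k) = T + k \<and> slot_of (lb k) = pR"
proof -
  have tri: "(3 * i) mod 3 = 0" "(3 * i + 1) mod 3 = 1" "(3 * i + 2) mod 3 = 2"
    "(3 * i) div 3 = i" "(3 * i + 1) div 3 = i" "(3 * i + 2) div 3 = i" for i :: nat by presburger+
  have lev: "(4 * k) mod 4 = 0" "(4 * k + 1) mod 4 = 1" "(4 * k + 2) mod 4 = 2" "(4 * k + 3) mod 4 = 3"
    "(4 * k) div 4 = k" "(4 * k + 1) div 4 = k" "(4 * k + 2) div 4 = k" "(4 * k + 3) div 4 = k"
    for k :: nat by presburger+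
  have "\<not> ls k < 3 * T" "\<not> lt k < 3 * T" "\<not> la k < 3 * T" "\<not> lb k < 3 * T"
    "ls k - 3 * T = 4 * k" "lt k - 3 * T = 4 * k + 1" "la k - 3 * T = 4 * k + 2" "lb k - 3 * T = 4 * k + 3"
    unfolding vertex_defs by auto
  thus "frame_of (ls k) = T + k \<and> slot_of (ls k) = pS" "frame_of (lt k) = T + k \<and> slot_of (lt k) = pC"
    "frame_of (la k) = T + k \<and> slot_of (la k) = pL" "frame_of (lb k) = T + k \<and> slot_of (lb k) = pR"
    unfolding frame_of_def slot_of_def by (simp_all only: lev if_False) simp_all
  show "i < T \<Longrightarrow> frame_of (tb i) = i \<and> slot_of (tb i) = pL"
    "i < T \<Longrightarrow> frame_of (tm i) = i \<and> slot_of (tm i) = pR"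
    "i < T \<Longrightarrow> frame_of (tt i) = i \<and> slot_of (tt i) = pC"
    unfolding frame_of_def slot_of_def vertex_defs by (simp_all only: tri) auto
qed

lemma vertex_at_frame_slot: assumes "v \<in> V"
  shows "frame_of v < frames \<and> slot_of v \<in> {pS, pL, pR, pC} \<and> (slot_of v = pS \<longrightarrow> T \<le> frame_of v) \<and>
    vertex_at (frame_of v) (slot_of v) = v"
  using assms by (cases rule: V_cases) (auto simp: frame_slot_of_vertices vertex_at_def frames_def)

lemma vertex_at_in_V: assumes "j < frames" "p \<in> {pL, pR, pC}"
  shows "vertex_at j p \<in> V \<and> frame_of (vertex_at j p) = j \<and> slot_of (vertex_at j p) = p"
proof (cases "j < T")
  case True thus ?thesis using assms by (auto simp: vertex_at_def frame_slot_of_vertices vertices_in_V)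
next
  case False
  hence "j - T < L" "T + (j - T) = j" using assms(1) unfolding frames_def by auto
  thus ?thesis using assms False by (auto simp: vertex_at_def frame_slot_of_vertices vertices_in_V)
qed

definition slot_py_int :: "nat \<Rightarrow> slot \<Rightarrow> int" where
  "slot_py_int j p = (case p of pS \<Rightarrow> int j * layer | pL \<Rightarrow> int j * layer + 4
     | pR \<Rightarrow> height - int j * layer - layer - 4 | pC \<Rightarrow> height - int j * layer
     | qL \<Rightarrow> int j * layer + layer + 4 | qR \<Rightarrow> height - int j * layer - 2 * layer - 4
     | qC \<Rightarrow> height - int j * layer - layer)"

lemma slot_py_int_eq: "j < frames \<Longrightarrow> real_of_int (slot_py_int j p) = slot_py j p"
  unfolding slot_py_int_def by (cases p) (simp_all add: slot_py_simps)

definition xpos :: "nat \<Rightarrow> real" where "xpos v = slot_px (frame_of v) (slot_of v)"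
definition ypos :: "nat \<Rightarrow> int" where "ypos v = slot_py_int (frame_of v) (slot_of v)"

definition at_slot :: "nat \<Rightarrow> nat \<Rightarrow> slot \<Rightarrow> bool" where
  "at_slot v j p \<longleftrightarrow> xpos v = slot_px j p \<and> real_of_int (ypos v) = slot_py j p"

lemma vertex_at_slot: "v \<in> V \<Longrightarrow> at_slot v (frame_of v) (slot_of v)"
  unfolding at_slot_def xpos_def ypos_def using slot_py_int_eq vertex_at_frame_slot by auto

lemma at_inner_slot: assumes "Suc j < frames"
  shows "at_slot v j qL \<longleftrightarrow> at_slot v (Suc j) pL" "at_slot v j qR \<longleftrightarrow> at_slot v (Suc j) pR"
    "at_slot v j qC \<longleftrightarrow> at_slot v (Suc j) pC"
  using assms unfolding at_slot_def by (auto simp: slot_px_simps slot_py_simps algebra_simps)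

lemma at_slot_vertices:
  "i < T \<Longrightarrow> at_slot (tb i) i pL" "i < T \<Longrightarrow> at_slot (tm i) i pR" "i < T \<Longrightarrow> at_slot (tt i) i pC"
  "k < L \<Longrightarrow> j = T + k \<Longrightarrow> at_slot (ls k) j pS" "k < L \<Longrightarrow> j = T + k \<Longrightarrow> at_slot (lt k) j pC"
  "k < L \<Longrightarrow> j = T + k \<Longrightarrow> at_slot (la k) j pL" "k < L \<Longrightarrow> j = T + k \<Longrightarrow> at_slot (lb k) j pR"
  using vertex_at_slot vertices_in_V frame_slot_of_vertices by metis+

definition kind :: "nat \<Rightarrow> frame_kind" where
  "kind j = (if Suc j < T then TriN else if Suc j = T then (if 0 < L then TriJ else Tri0)
     else if Suc j < frames then LevN else LevL)"

lemma kind_outer_slots: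
  "j < frames \<Longrightarrow> p \<in> {pS, pL, pR, pC} \<Longrightarrow> (p = pS \<longrightarrow> T \<le> j) \<Longrightarrow> p \<in> frame_slots (kind j)"
  unfolding kind_def frames_def by auto

lemma kind_inner_slots: "Suc j < frames \<Longrightarrow> p \<in> {qL, qR, qC} \<Longrightarrow> p \<in> frame_slots (kind j)"
  unfolding kind_def frames_def by auto

lemma kind_inner_routes: "Suc j < frames \<Longrightarrow> SC \<notin> frame_routes (kind j)"
  unfolding kind_def frames_def by auto

lemma routed_in_frame:
  assumes "routed e j k"
  shows "j < frames \<and> k \<in> frame_routes (kind j) \<and> at_slot (fst e) j (route_src k) \<and> at_slot (snd e) j (route_dst k)"
  using assms T_pos
  by cases (auto simp: kind_def frames_def at_inner_slot at_slot_vertices)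

lemma outer_slot_in_frame:
  assumes "j < frames" "p \<in> {pS, pL, pR, pC}"
  shows "frame_left j \<le> slot_px j p \<and> slot_px j p \<le> frame_right j \<and>
    frame_bot j \<le> slot_py j p \<and> slot_py j p \<le> frame_top j"
proof -
  interpret B: frame_box "frame_left j" "frame_right j" "frame_bot j" "frame_top j" "of_int layer"
    by (rule frame_box[OF assms(1)])
  show ?thesis using assms(2) B.wide B.layer_ge B.tall unfolding slot_px_def slot_py_def by auto
qed

lemma frames_nested:
  assumes "j + d \<le> j'"
  shows "frame_left j + 4 * real d \<le> frame_left j' \<and> frame_right j' \<le> frame_right j - 4 * real d \<and>
    frame_bot j + real d * of_int layer \<le> frame_bot j' \<and> frame_top j' \<le> frame_top j - real d * of_int layer"
proof -
  have "real j + real d \<le> real j'" using assms by linarith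
  hence "(real j + real d) * of_int layer \<le> real j' * of_int layer"
    by (rule mult_right_mono) (simp add: layer_def)
  thus ?thesis using assms unfolding frame_defs by (auto simp: algebra_simps)
qed

lemma inner_frame: "frame_left (Suc j) = frame_left j + 4" "frame_right (Suc j) = frame_right j - 4"
  "frame_bot (Suc j) = frame_bot j + of_int layer" "frame_top (Suc j) = frame_top j - of_int layer"
  unfolding frame_defs by (auto simp: algebra_simps)

lemma outer_slot_outside_frame:
  assumes "jw < j" "j < frames" "p \<in> {pS, pL, pR, pC}"
  shows "slot_px jw p < frame_left j \<or> frame_right j < slot_px jw p \<or> slot_py jw p < frame_bot j"
proof -
  have "real jw * of_int layer < real j * of_int layer" using assms(1) by (simp add: layer_def)
  thus ?thesis using assms slot_px_simps[of jw] slot_py_simps[of jw] unfolding frame_defs by auto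
qed

lemma outer_slot_deep_inside:
  assumes "j < frames" "jw < frames" "p \<in> {pS, pL, pR, pC}" "(jw = Suc j \<and> p = pS) \<or> Suc (Suc j) \<le> jw"
  shows "frame_left j + 4 < slot_px jw p \<and> slot_px jw p < frame_right j - 4 \<and>
    frame_bot j + of_int layer \<le> slot_py jw p \<and> slot_py jw p \<le> frame_top j - of_int layer"
  using assms(4)
proof
  assume "jw = Suc j \<and> p = pS"
  moreover have "2 * (real j + 1) * of_int layer \<le> (2 * real frames + 1) * of_int layer"
    using assms(2) calculation by (intro mult_right_mono) (auto simp: layer_def)
  ultimately show ?thesis using assms(2)
    by (auto simp: slot_px_simps slot_py_simps frame_defs width_def height_def algebra_simps)
next
  assume "Suc (Suc j) \<le> jw"
  with frames_nested[of j 2 jw] outer_slot_in_frame[OF assms(2,3)] layer_pos show ?thesis by auto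
qed

lemma outer_slot_point_inj:
  assumes "j1 < frames" "j2 < frames" "p1 \<in> {pS, pL, pR, pC}" "p2 \<in> {pS, pL, pR, pC}"
    and "slot_px j1 p1 = slot_px j2 p2" "slot_py j1 p1 = slot_py j2 p2"
  shows "j1 = j2 \<and> p1 = p2"
proof -
  have mixed: False
    if "j < frames" "j' < frames" "slot_px j pS = slot_px j' pL" "slot_py j pS = slot_py j' pL" for j j'
  proof -
    have "real j' = real j + 1" using that by (simp add: slot_px_simps)
    hence "real j' * of_int layer = real j * of_int layer + of_int layer" by (simp add: algebra_simps)
    thus False using that layer_pos by (simp add: slot_py_simps)
  qed
  have "\<not> (p1 = pS \<and> p2 = pL)" "\<not> (p1 = pL \<and> p2 = pS)"
    using mixed[of j1 j2] mixed[of j2 j1] assms by auto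
  thus ?thesis using assms layer_pos by (auto simp: slot_px_simps slot_py_simps width_def algebra_simps)
qed

lemma position_inj:
  assumes "u \<in> V" "v \<in> V" "xpos u = xpos v" "ypos u = ypos v"
  shows "u = v"
  using outer_slot_point_inj[of "frame_of u" "frame_of v" "slot_of u" "slot_of v"]
    vertex_at_frame_slot[OF assms(1)] vertex_at_frame_slot[OF assms(2)]
    vertex_at_slot[OF assms(1)] vertex_at_slot[OF assms(2)] assms(3,4)
  unfolding at_slot_def by metis

definition route_of :: "nat \<times> nat \<Rightarrow> nat \<times> route" where
  "route_of e = (SOME jk. routed e (fst jk) (snd jk))"

lemma route_of_fits: assumes "e \<in> E" "route_of e = (j, k)"
  shows "j < frames \<and> k \<in> frame_routes (kind j) \<and>
    at_slot (fst e) j (route_src k) \<and> at_slot (snd e) j (route_dst k)"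
proof -
  obtain j0 k0 where "routed e j0 k0" using assms(1) unfolding E_iff by blast
  hence "routed e (fst (route_of e)) (snd (route_of e))"
    unfolding route_of_def by (intro someI[of "\<lambda>jk. routed e (fst jk) (snd jk)" "(j0, k0)"]) simp
  thus ?thesis using routed_in_frame assms(2) by simp
qed

lemma route_through_frame_slot:
  assumes e: "e \<in> E" "route_of e = (j, k)" and w: "w \<in> V"
    and p: "p \<in> frame_slots (kind j)" "at_slot w j p"
    and h: "on_route_at j k h" "route_px j k h = xpos w" "h = of_int (ypos w)"
  shows "w = fst e \<or> w = snd e"
proof (cases "p = route_src k \<or> p = route_dst k")
  case True
  thus ?thesis using p(2) route_of_fits[OF e] position_inj[OF w] E_subset e(1) unfolding at_slot_def by force
next
  case False
  note fits = route_of_fits[OF e]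
  interpret B: frame_box "frame_left j" "frame_right j" "frame_bot j" "frame_top j" "of_int layer"
    by (rule frame_box) (use fits in auto)
  have "B.on_route k (B.slot_y p) \<and> B.route_x k (B.slot_y p) = B.slot_x p"
    using p(2) h unfolding at_slot_def slot_px_def slot_py_def on_route_at_def route_px_def by auto
  thus ?thesis using B.frame_route_avoids_slots[OF _ p(1)] fits False by blast
qed

lemma route_avoids_other_vertices:
  assumes e: "e \<in> E" "route_of e = (j, k)" and w: "w \<in> V"
    and h: "on_route_at j k h" "route_px j k h = xpos w" "h = of_int (ypos w)"
  shows "w = fst e \<or> w = snd e"
proof -
  note fits = route_of_fits[OF e]
  note end_slot = route_through_frame_slot[OF e w _ _ h]
  interpret B: frame_box "frame_left j" "frame_right j" "frame_bot j" "frame_top j" "of_int layer"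
    by (rule frame_box) (use fits in auto)
  have on: "B.on_route k h" using h unfolding on_route_at_def by auto
  define jw where "jw = frame_of w"
  define pw where "pw = slot_of w"
  have wf: "jw < frames" "pw \<in> {pS, pL, pR, pC}" "pw = pS \<longrightarrow> T \<le> jw" "at_slot w jw pw"
    using vertex_at_frame_slot[OF w] vertex_at_slot[OF w] unfolding jw_def pw_def by auto
  have pt: "B.route_x k h = slot_px jw pw" "h = slot_py jw pw"
    using h(2,3) wf(4) unfolding at_slot_def route_px_def by auto
  consider (outer) "jw < j" | (same) "jw = j" | (inner) "jw = Suc j" "pw \<noteq> pS"
    | (deep) "(jw = Suc j \<and> pw = pS) \<or> Suc (Suc j) \<le> jw" by linarith
  thus ?thesis
  proof cases
    case outer
    thus ?thesis using outer_slot_outside_frame[OF outer _ wf(2)] B.route_in_box[OF on] fits pt by auto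
  next
    case same
    thus ?thesis using end_slot kind_outer_slots wf by auto
  next
    case inner
    hence "Suc j < frames" using wf(1) by simp
    hence "\<exists>q \<in> {qL, qR, qC}. at_slot w j q" using at_inner_slot[of j w] wf(2,4) inner by auto
    thus ?thesis using end_slot kind_inner_slots[OF \<open>Suc j < frames\<close>] by blast
  next
    case deep
    have "Suc j < frames" using deep wf(1) by auto
    moreover note in_box = outer_slot_deep_inside[OF _ wf(1,2) deep]
    ultimately have "B.route_x k h = frame_left j + 4 \<or> B.route_x k h = frame_right j - 4"
      using B.route_in_inner_region[OF _ on] kind_inner_routes fits pt by fastforce
    thus ?thesis using in_box fits pt by auto
  qed
qed

definition vertex_point :: "real \<Rightarrow> real \<Rightarrow> bool" where
  "vertex_point x h \<longleftrightarrow> (\<exists>w \<in> V. xpos w = x \<and> of_int (ypos w) = h)"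

lemma vertex_point_slot: "v \<in> V \<Longrightarrow> at_slot v j p \<Longrightarrow> vertex_point (slot_px j p) (slot_py j p)"
  unfolding vertex_point_def at_slot_def by auto

lemma same_frame_routes_meet_at_vertex:
  assumes e: "e \<in> E" "route_of e = (j, k)" and f: "f \<in> E" "route_of f = (j, k')" and ne: "e \<noteq> f"
    and h: "on_route_at j k h" "on_route_at j k' h" "route_px j k h = route_px j k' h"
  shows "vertex_point (route_px j k h) h"
proof -
  note fits = route_of_fits[OF e] and fits' = route_of_fits[OF f]
  interpret B: frame_box "frame_left j" "frame_right j" "frame_bot j" "frame_top j" "of_int layer"
    by (rule frame_box) (use fits in auto)
  have ends: "fst e \<in> V" "snd e \<in> V" "fst f \<in> V" "snd f \<in> V" using e(1) f(1) E_subset by auto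
  have "k \<noteq> k'"
  proof
    assume "k = k'"
    hence "fst e = fst f" "snd e = snd f"
      using position_inj[OF ends(1,3)] position_inj[OF ends(2,4)] fits fits'
      unfolding at_slot_def by (simp_all add: of_int_eq_iff[symmetric])
    thus False using ne by (simp add: prod_eq_iff)
  qed
  hence "h \<in> {B.slot_y (route_src k), B.slot_y (route_dst k), B.slot_y (route_src k'), B.slot_y (route_dst k')}"
    using B.frame_routes_not_cross_inside[of k "kind j" k'] fits fits' h
    unfolding B.routes_cross_inside_def on_route_at_def B.on_route_def route_px_def by force
  moreover have "route_px j k h = slot_px j p"
    if "p \<in> {route_src k, route_dst k, route_src k', route_dst k'}" "h = slot_py j p" for p
    using that h(3) B.route_x_src B.route_x_dst unfolding slot_px_def slot_py_def route_px_def by auto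
  ultimately show ?thesis
    using vertex_point_slot[OF ends(1)] vertex_point_slot[OF ends(2)] vertex_point_slot[OF ends(3)]
      vertex_point_slot[OF ends(4)] fits fits' unfolding slot_py_def by fastforce
qed

lemma inner_frame_routes_meet_at_vertex:
  assumes e: "e \<in> E" "route_of e = (j, k)" and f: "f \<in> E" "route_of f = (Suc j, k')"
    and h: "on_route_at j k h" "on_route_at (Suc j) k' h" "route_px j k h = route_px (Suc j) k' h"
  shows "vertex_point (route_px j k h) h"
proof -
  note fits = route_of_fits[OF e] and fits' = route_of_fits[OF f]
  interpret B: frame_box "frame_left j" "frame_right j" "frame_bot j" "frame_top j" "of_int layer"
    by (rule frame_box) (use fits in auto)
  interpret B': frame_box "frame_left (Suc j)" "frame_right (Suc j)" "frame_bot (Suc j)" "frame_top (Suc j)"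
    "of_int layer" by (rule frame_box) (use fits' in auto)
  have on: "B.on_route k h" "B'.on_route k' h" and x: "B.route_x k h = B'.route_x k' h"
    using h unfolding on_route_at_def route_px_def by auto
  have "Suc j < frames" using fits' by simp
  have "B.route_x k h = frame_left j + 4 \<or> (B.route_x k h = frame_right j - 4 \<and> h \<in> {B.slot_y qR, B.slot_y qC})"
    using B.route_in_inner_region[OF _ on(1)] B'.route_in_box[OF on(2)]
      kind_inner_routes[OF \<open>Suc j < frames\<close>] fits x unfolding inner_frame by auto
  thus ?thesis
  proof
    assume "B.route_x k h = frame_left j + 4"
    hence "B'.route_x k' h = frame_left (Suc j)" using x inner_frame(1) by simp
    hence "B'.route_x k' h = B'.slot_x pL" by simp
    moreover from this have "h = B'.slot_y pL" using B'.route_on_left_side[OF on(2)] by simp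
    ultimately show ?thesis
      using vertex_point_slot[of "vertex_at (Suc j) pL" "Suc j" pL] vertex_at_in_V[of "Suc j" pL]
        vertex_at_slot fits' x unfolding slot_px_def slot_py_def route_px_def by force
  next
    assume "B.route_x k h = frame_right j - 4 \<and> h \<in> {B.slot_y qR, B.slot_y qC}"
    hence "\<exists>q p. (q = qR \<and> p = pR \<or> q = qC \<and> p = pC) \<and> h = slot_py j q \<and> route_px j k h = slot_px j q"
      unfolding slot_px_def slot_py_def route_px_def by auto
    then obtain q p where qp: "q = qR \<and> p = pR \<or> q = qC \<and> p = pC" "h = slot_py j q" "route_px j k h = slot_px j q"
      by blast
    have v: "vertex_at (Suc j) p \<in> V" "at_slot (vertex_at (Suc j) p) (Suc j) p"
      using vertex_at_in_V[of "Suc j" p] vertex_at_slot[of "vertex_at (Suc j) p"] fits' qp(1) by auto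
    hence "at_slot (vertex_at (Suc j) p) j q" using at_inner_slot[OF \<open>Suc j < frames\<close>] qp(1) by auto
    thus ?thesis using vertex_point_slot[OF v(1)] qp(2,3) by simp
  qed
qed

lemma deep_frame_routes_disjoint:
  assumes e: "e \<in> E" "route_of e = (j, k)" and f: "f \<in> E" "route_of f = (j', k')" and jj: "j + 2 \<le> j'"
    and h: "on_route_at j k h" "on_route_at j' k' h"
  shows "route_px j k h \<noteq> route_px j' k' h"
proof
  assume x: "route_px j k h = route_px j' k' h"
  note fits = route_of_fits[OF e] and fits' = route_of_fits[OF f]
  interpret B: frame_box "frame_left j" "frame_right j" "frame_bot j" "frame_top j" "of_int layer"
    by (rule frame_box) (use fits in auto)
  interpret B': frame_box "frame_left j'" "frame_right j'" "frame_bot j'" "frame_top j'" "of_int layer"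
    by (rule frame_box) (use fits' in auto)
  have on: "B.on_route k h" "B'.on_route k' h" using h unfolding on_route_at_def by auto
  have "Suc j < frames" using fits' jj by simp
  from frames_nested[OF jj] B'.route_in_box[OF on(2)] layer_pos
  have "frame_left j + 4 < B.route_x k h" "B.route_x k h < frame_right j - 4"
    "frame_bot j + of_int layer \<le> h" "h \<le> frame_top j - of_int layer"
    using x unfolding route_px_def by auto
  thus False
    using B.route_in_inner_region[OF _ on(1)] kind_inner_routes[OF \<open>Suc j < frames\<close>] fits by fastforce
qed

lemma routes_meet_at_vertex:
  assumes e: "e \<in> E" "route_of e = (j, k)" and f: "f \<in> E" "route_of f = (j', k')"
    and ne: "e \<noteq> f" and jj: "j \<le> j'"
    and h: "on_route_at j k h" "on_route_at j' k' h" "route_px j k h = route_px j' k' h"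
  shows "vertex_point (route_px j k h) h"
proof -
  consider (same) "j' = j" | (inner) "j' = Suc j" | (deep) "j + 2 \<le> j'" using jj by linarith
  thus ?thesis
  proof cases
    case same thus ?thesis using same_frame_routes_meet_at_vertex[OF e] f ne h by simp
  next
    case inner thus ?thesis using inner_frame_routes_meet_at_vertex[OF e] f h by simp
  next
    case deep thus ?thesis using deep_frame_routes_disjoint[OF e f deep h(1,2)] h(3) by simp
  qed
qed

lemma on_route_at_edge:
  assumes "e \<in> E" "route_of e = (j, k)"
  shows "on_route_at j k h \<longleftrightarrow> of_int (ypos (fst e)) \<le> h \<and> h \<le> of_int (ypos (snd e))"
    and "of_int (ypos (fst e)) < (of_int (ypos (snd e)) :: real)"
    and "route_px j k (of_int (ypos (fst e))) = xpos (fst e)" "route_px j k (of_int (ypos (snd e))) = xpos (snd e)"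
proof -
  note fits = route_of_fits[OF assms]
  interpret B: frame_box "frame_left j" "frame_right j" "frame_bot j" "frame_top j" "of_int layer"
    by (rule frame_box) (use fits in auto)
  show "on_route_at j k h \<longleftrightarrow> of_int (ypos (fst e)) \<le> h \<and> h \<le> of_int (ypos (snd e))"
    "of_int (ypos (fst e)) < (of_int (ypos (snd e)) :: real)"
    "route_px j k (of_int (ypos (fst e))) = xpos (fst e)" "route_px j k (of_int (ypos (snd e))) = xpos (snd e)"
    using fits B.route_src_below_dst B.route_x_src B.route_x_dst
    unfolding at_slot_def on_route_at_def B.on_route_def route_px_def slot_px_def slot_py_def by auto
qed

definition curve_height :: "nat \<times> nat \<Rightarrow> real \<Rightarrow> real" where
  "curve_height e t = of_int (ypos (fst e)) + t * (of_int (ypos (snd e)) - of_int (ypos (fst e)))"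

definition curve :: "nat \<times> nat \<Rightarrow> real \<Rightarrow> real \<times> real" where
  "curve e t = (route_px (fst (route_of e)) (snd (route_of e)) (curve_height e t), curve_height e t)"

lemma curve_height_strict_mono:
  "e \<in> E \<Longrightarrow> s < t \<Longrightarrow> curve_height e s < curve_height e t"
  using on_route_at_edge(2)[of e "fst (route_of e)" "snd (route_of e)"]
  unfolding curve_height_def by (simp add: mult_strict_right_mono)

lemma curve_height_bounds:
  assumes "e \<in> E" "0 \<le> t" "t \<le> 1"
  shows "of_int (ypos (fst e)) \<le> curve_height e t" "curve_height e t \<le> of_int (ypos (snd e))"
proof -
  have "0 \<le> of_int (ypos (snd e)) - (of_int (ypos (fst e)) :: real)"
    using on_route_at_edge(2)[of e "fst (route_of e)" "snd (route_of e)"] assms(1) by simp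
  from mult_right_mono[OF assms(3) this] mult_nonneg_nonneg[OF assms(2) this]
  show "of_int (ypos (fst e)) \<le> curve_height e t" "curve_height e t \<le> of_int (ypos (snd e))"
    unfolding curve_height_def by simp_all
qed

lemma curve_on_edge:
  assumes e: "e \<in> E"
  shows "continuous_on {0..1} (curve e)" "curve e 0 = updraw_point xpos ypos (fst e)"
    "curve e 1 = updraw_point xpos ypos (snd e)"
proof -
  obtain j k where jk: "route_of e = (j, k)" by (cases "route_of e")
  have "continuous_on {0..1} (curve_height e)" unfolding curve_height_def by (intro continuous_intros)
  moreover have "continuous_on UNIV (route_px j k)"
    using frame_box.route_x_cont[OF frame_box] route_of_fits[OF e jk] unfolding route_px_def by auto
  ultimately show "continuous_on {0..1} (curve e)"
    unfolding curve_def jk by (auto intro!: continuous_intros continuous_on_compose2[of UNIV "route_px j k"])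
  show "curve e 0 = updraw_point xpos ypos (fst e)" "curve e 1 = updraw_point xpos ypos (snd e)"
    using on_route_at_edge[OF e jk] unfolding curve_def curve_height_def updraw_point_def jk by simp_all
qed

lemma curve_avoids_vertices:
  assumes e: "e \<in> E" and t: "0 < t" "t < 1" and w: "w \<in> V"
  shows "curve e t \<noteq> updraw_point xpos ypos w"
proof
  assume eq: "curve e t = updraw_point xpos ypos w"
  obtain j k where jk: "route_of e = (j, k)" by (cases "route_of e")
  have h: "of_int (ypos (fst e)) < curve_height e t" "curve_height e t < of_int (ypos (snd e))"
    using curve_height_strict_mono[OF e, of 0 t] curve_height_strict_mono[OF e, of t 1] t
    unfolding curve_height_def by simp_all
  have "route_px j k (curve_height e t) = xpos w" "curve_height e t = of_int (ypos w)"
    using eq unfolding curve_def updraw_point_def jk by auto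
  from route_avoids_other_vertices[OF e jk w _ this] h on_route_at_edge(1)[OF e jk]
  show False using \<open>curve_height e t = of_int (ypos w)\<close> by auto
qed

lemma curves_meet_at_common_vertex:
  assumes e: "e \<in> E" and f: "f \<in> E" and ne: "e \<noteq> f"
    and st: "0 \<le> s" "s \<le> 1" "0 \<le> t" "t \<le> 1" and eq: "curve e s = curve f t"
  shows "\<exists>w. (w = fst e \<or> w = snd e) \<and> (w = fst f \<or> w = snd f) \<and> curve e s = updraw_point xpos ypos w"
proof -
  obtain j k where jk: "route_of e = (j, k)" by (cases "route_of e")
  obtain j' k' where jk': "route_of f = (j', k')" by (cases "route_of f")
  define h where "h = curve_height e s"
  have hf: "curve_height f t = h" and x: "route_px j k h = route_px j' k' h"
    using eq unfolding curve_def h_def jk jk' by auto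
  have on: "on_route_at j k h" "on_route_at j' k' h"
    using curve_height_bounds[OF e st(1,2)] curve_height_bounds[OF f st(3,4)] hf
      on_route_at_edge(1)[OF e jk] on_route_at_edge(1)[OF f jk'] unfolding h_def by auto
  have "vertex_point (route_px j k h) h"
  proof (cases "j \<le> j'")
    case True thus ?thesis using routes_meet_at_vertex[OF e jk f jk' ne True on x] by blast
  next
    case False
    hence "j' \<le> j" by simp
    from routes_meet_at_vertex[OF f jk' e jk ne[symmetric] this on(2,1) x[symmetric]] show ?thesis
      using x by simp
  qed
  then obtain w where w: "w \<in> V" "xpos w = route_px j k h" "of_int (ypos w) = h"
    unfolding vertex_point_def by blast
  have "w = fst e \<or> w = snd e" by (rule route_avoids_other_vertices[OF e jk w(1) on(1)]) (use w in auto)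
  moreover have "w = fst f \<or> w = snd f" by (rule route_avoids_other_vertices[OF f jk' w(1) on(2)]) (use w x in auto)
  moreover have "curve e s = updraw_point xpos ypos w"
    unfolding curve_def updraw_point_def jk fst_conv snd_conv h_def[symmetric] using w(2,3) by simp
  ultimately show ?thesis by blast
qed

lemma drawing: "upward_planar_layered_drawing V E xpos ypos curve"
  unfolding upward_planar_layered_drawing_def
proof (intro conjI ballI allI impI)
  show "inj_on (updraw_point xpos ypos) V"
    using position_inj unfolding inj_on_def updraw_point_def by auto
next
  fix e and s t :: real assume "e \<in> E" "0 \<le> s" "s < t" "t \<le> 1"
  thus "snd (curve e s) < snd (curve e t)" using curve_height_strict_mono unfolding curve_def by simp
qed (use curve_on_edge curve_avoids_vertices curves_meet_at_common_vertex in auto)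

lemma upward_planar: "upward_planar V E"
  unfolding upward_planar_def using drawing by blast

lemma graph_span_lower: "(if L = 0 then 2 else int L + 1) \<le> int (graph_span V E)"
proof -
  obtain xp y c where "upward_planar_layered_drawing V E xp y c" "drawing_span E y = int (graph_span V E)"
    using graph_span_attained[OF drawing finite_E] .
  thus ?thesis using drawing_span_lower by metis
qed

end

theorem mainTheorem2:
  fixes n :: nat
  assumes "n \<ge> 1"
  shows "\<exists>(V :: nat set) (E :: (nat \<times> nat) set).
           is_dag V E \<and> card V = 3 * n \<and> three_connected V E \<and>
           upward_planar V E \<and>
           (\<forall>v\<in>V. degree E v \<le> 4) \<and>
           (\<forall>xs. dir_path V E xs \<longrightarrow> length xs - 1 \<le> 5) \<and>
           real (graph_span V E) \<ge> real n / 2"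
proof -
  define q where "q = (n - 1) div 4"
  have q: "4 * q < n" "n \<le> 4 * q + 4" using assms unfolding q_def by auto
  interpret G: family "n - 4 * q" "3 * q" by unfold_locales (use q in simp)
  have "card G.V = 3 * n" using G.card_V q by simp
  moreover have "real n / 2 \<le> real (graph_span G.V G.E)"
    using G.graph_span_lower q by (cases "q = 0") auto
  moreover have "length xs - 1 \<le> 5" if "dir_path G.V G.E xs" for xs
    using G.dir_path_length[OF that] by simp
  ultimately show ?thesis
    using G.is_dag G.three_connected G.upward_planar G.degree_le_4 by blast
qed

end
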